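(* In the standing setup below, let $\mathsf f$ be an outer edge with $V(\mathsf f)=\{u,v\}$ and let $\mathsf C$ be an outer cycle of $\mathsf f$ of length $3$ with $V(\mathsf C)=\{u,v,w\}$. Then there exists $k\in\{1,\dots,t\}$ such that $u,v,w\in V(\mathsf T_k)$ and $u,v\in\mathrm{child}_{\mathsf T_k}(w)$.
   Context: Colored graphs: a (colored) graph is a finite set of pairs $(e,\alpha)$ with the $e$'s pairwise distinct 2-element vertex subsets $uv$ and $\alpha$ colors (repeats allowed); $V(\cdot),E(\cdot),\chi(\cdot)$ are vertex set, underlying uncolored edge set, color set; rainbow means $|\chi(\mathsf G)|=|\mathsf G|$, almost rainbow means $|\chi(\mathsf G)|=|\mathsf G|-1$; subgraphs are subsets; $\mathsf G+\mathsf e=\mathsf G\cup\{\mathsf e\}$, $\mathsf G-\mathsf e=\mathsf G\setminus\{\mathsf e\}$. Paths/cycles/trees are colored graphs whose underlying edges form a path (two distinct terminals)/cycle/tree; lengths count edges. A long rainbow odd cycle is a rainbow cycle of odd length $\ge7$. A theta graph is a union of three paths with the same terminals $s\ne t$, pairwise sharing no vertex except $s,t$ and no underlying edge; a bad piece is an almost rainbow theta graph with $\ge6$ vertices that is the union of three rainbow such paths. A partition of a graph $\mathsf G$ is a collection of graphs (parts) with union $\mathsf G$, any two sharing at most one vertex and no color. A Frankenstein graph is a graph with a partition $\{\mathsf C_1,..,\mathsf C_c,\mathsf B_1,..,\mathsf B_b,\mathsf T_1,..,\mathsf T_t\}$ ($c+b+t\ge1$) into long rainbow odd cycles $\mathsf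 C_i$, bad pieces $\mathsf B_i$ and pairwise vertex-disjoint rainbow trees $\mathsf T_i$, having no rainbow even cycle as a subgraph. For a tree $\mathsf T$ with $V(\mathsf T)\subset\mathbb Z_{>0}$, its root is $\min V(\mathsf T)$ and $\mathrm{depth}_{\mathsf T}(v)$ is the length of the path in $\mathsf T$ from the root to $v$; $\mathrm{child}_{\mathsf T}(v)=\{w\in V(\mathsf T): vw\in E(\mathsf T),\ \mathrm{depth}_{\mathsf T}(w)=\mathrm{depth}_{\mathsf T}(v)+1\}$; the total depth $\mathrm{Depth}(\mathfrak F)$ of a Frankenstein graph is $\sum_{i=1}^t\sum_{v\in V(\mathsf T_i)}\mathrm{depth}_{\mathsf T_i}(v)$. Standing setup: $n\ge1$, $m=\lfloor 6(n-1)/5\rfloor+1$, and $\mathcal D=(\mathsf D_1,\dots,\mathsf D_m)$ is a family of even cycles on $[n]=\{1,\dots,n\}$, all edges of $\mathsf D_i$ having color $i$, such that no rainbow even cycle is a subgraph of $\bigcup_i\mathsf D_i$ (a subgraph of $\mathcal D$ means a simple graph $\subseteq\bigcup_i\mathsf D_i$). Two edges are coincident if they have the same vertex pair and different colors. $\mathfrak F_*$ is a Frankenstein subgraph of $\mathcal D$ (with partition) chosen to maximize $c$, then $b$, then $|\mathfrak F_*|$, then to minimize $\mathrm{Depth}(\mathfrak F_* )$; its partition is $\{\mathsf C_1,..,\mathsf C_c,\mathsf B_1,..,\mathsf B_b,\mathsf T_1,..,\mathsf T_t\}$. Let $\Lambda=\{1,\dots,m\}\setminus\chi(\mathfrak F_*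 )$. An outer edge is an edge $\mathsf f$ of $\bigcup_{\lambda\in\Lambda}\mathsf D_\lambda$ such that no edge of $\mathfrak F_*$ is coincident to $\mathsf f$. An outer cycle of an outer edge $\mathsf f$ is a rainbow cycle of length $3$ or $5$ in $\mathfrak F_*+\mathsf f$ containing $\mathsf f$. *)

theory Defs
  imports Main
begin

type_synonym cgraph = "(nat set \<times> nat) set"

definition is_cgraph :: "cgraph \<Rightarrow> bool" where
  "is_cgraph G \<longleftrightarrow> finite G \<and> (\<forall>x\<in>G. card (fst x) = 2)
     \<and> (\<forall>x\<in>G. \<forall>y\<in>G. fst x = fst y \<longrightarrow> x = y)"

definition verts :: "cgraph \<Rightarrow> nat set" where
  "verts G = \<Union> (fst ` G)"

definition uedges :: "cgraph \<Rightarrow> nat set set" where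
  "uedges G = fst ` G"

definition colors :: "cgraph \<Rightarrow> nat set" where
  "colors G = snd ` G"

definition rainbow :: "cgraph \<Rightarrow> bool" where
  "rainbow G \<longleftrightarrow> card (colors G) = card G"

definition almost_rainbow :: "cgraph \<Rightarrow> bool" where
  "almost_rainbow G \<longleftrightarrow> card (colors G) + 1 = card G"

definition pedges :: "nat list \<Rightarrow> nat set set" where
  "pedges xs = (\<lambda>(a, b). {a, b}) ` set (zip xs (tl xs))"

definition cedges :: "nat list \<Rightarrow> nat set set" where
  "cedges xs = pedges (xs @ [hd xs])"

definition is_path :: "cgraph \<Rightarrow> nat \<Rightarrow> nat \<Rightarrow> bool" where
  "is_path P s t \<longleftrightarrow> is_cgraph P \<and> s \<noteq> t \<and>
     (\<exists>xs. distinct xs \<and> length xs \<ge> 2 \<and> hd xs = s \<and> last xs = t \<and> uedges P = pedges xs)"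

definition is_cycle :: "cgraph \<Rightarrow> bool" where
  "is_cycle C \<longleftrightarrow> is_cgraph C \<and>
     (\<exists>xs. distinct xs \<and> length xs \<ge> 3 \<and> uedges C = cedges xs)"

definition rainbow_even_cycle :: "cgraph \<Rightarrow> bool" where
  "rainbow_even_cycle C \<longleftrightarrow> is_cycle C \<and> rainbow C \<and> even (card C)"

definition long_rainbow_odd_cycle :: "cgraph \<Rightarrow> bool" where
  "long_rainbow_odd_cycle C \<longleftrightarrow> is_cycle C \<and> rainbow C \<and> odd (card C) \<and> card C \<ge> 7"

definition adj :: "cgraph \<Rightarrow> (nat \<times> nat) set" where
  "adj G = {(x, y). {x, y} \<in> uedges G}"

definition is_tree :: "cgraph \<Rightarrow> bool" where
  "is_tree T \<longleftrightarrow> is_cgraph T \<and> T \<noteq> {} \<and>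
     (\<forall>x\<in>verts T. \<forall>y\<in>verts T. (x, y) \<in> (adj T)\<^sup>*) \<and>
     \<not> (\<exists>C. C \<subseteq> T \<and> is_cycle C)"

definition is_theta :: "cgraph \<Rightarrow> cgraph \<Rightarrow> cgraph \<Rightarrow> nat \<Rightarrow> nat \<Rightarrow> bool" where
  "is_theta P1 P2 P3 s t \<longleftrightarrow> s \<noteq> t \<and> is_path P1 s t \<and> is_path P2 s t \<and> is_path P3 s t \<and>
     verts P1 \<inter> verts P2 = {s, t} \<and> verts P1 \<inter> verts P3 = {s, t} \<and> verts P2 \<inter> verts P3 = {s, t} \<and>
     uedges P1 \<inter> uedges P2 = {} \<and> uedges P1 \<inter> uedges P3 = {} \<and> uedges P2 \<inter> uedges P3 = {}"

definition bad_piece :: "cgraph \<Rightarrow> bool" where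
  "bad_piece B \<longleftrightarrow> is_cgraph B \<and> almost_rainbow B \<and> card (verts B) \<ge> 6 \<and>
     (\<exists>P1 P2 P3 s t. is_theta P1 P2 P3 s t \<and> rainbow P1 \<and> rainbow P2 \<and> rainbow P3 \<and>
        B = P1 \<union> P2 \<union> P3)"

definition is_partition :: "cgraph \<Rightarrow> cgraph list \<Rightarrow> bool" where
  "is_partition G ps \<longleftrightarrow> \<Union> (set ps) = G \<and>
     (\<forall>i<length ps. \<forall>j<length ps. i \<noteq> j \<longrightarrow>
        card (verts (ps ! i) \<inter> verts (ps ! j)) \<le> 1 \<and> colors (ps ! i) \<inter> colors (ps ! j) = {})"

definition frankenstein :: "cgraph \<Rightarrow> cgraph list \<Rightarrow> cgraph list \<Rightarrow> cgraph list \<Rightarrow> bool" where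
  "frankenstein F Cs Bs Ts \<longleftrightarrow> is_cgraph F \<and> is_partition F (Cs @ Bs @ Ts) \<and>
     length Cs + length Bs + length Ts \<ge> 1 \<and>
     (\<forall>C\<in>set Cs. long_rainbow_odd_cycle C) \<and>
     (\<forall>B\<in>set Bs. bad_piece B) \<and>
     (\<forall>T\<in>set Ts. is_tree T \<and> rainbow T) \<and>
     (\<forall>i<length Ts. \<forall>j<length Ts. i \<noteq> j \<longrightarrow> verts (Ts ! i) \<inter> verts (Ts ! j) = {}) \<and>
     \<not> (\<exists>H. H \<subseteq> F \<and> rainbow_even_cycle H)"

definition root :: "cgraph \<Rightarrow> nat" where
  "root T = Min (verts T)"

definition depth :: "cgraph \<Rightarrow> nat \<Rightarrow> nat" where
  "depth T v = (THE k. \<exists>xs. distinct xs \<and> xs \<noteq> [] \<and> hd xs = root T \<and> last xs = v \<and>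
       pedges xs \<subseteq> uedges T \<and> k = length xs - 1)"

definition child :: "cgraph \<Rightarrow> nat \<Rightarrow> nat set" where
  "child T v = {w \<in> verts T. {v, w} \<in> uedges T \<and> depth T w = depth T v + 1}"

definition total_depth :: "cgraph list \<Rightarrow> nat" where
  "total_depth Ts = (\<Sum>i<length Ts. \<Sum>v\<in>verts (Ts ! i). depth (Ts ! i) v)"

definition union_D :: "nat \<Rightarrow> (nat \<Rightarrow> cgraph) \<Rightarrow> cgraph" where
  "union_D m D = (\<Union>i\<in>{1..m}. D i)"

definition standing_setup :: "nat \<Rightarrow> nat \<Rightarrow> (nat \<Rightarrow> cgraph) \<Rightarrow> bool" where
  "standing_setup n m D \<longleftrightarrow> n \<ge> 1 \<and> m = 6 * (n - 1) div 5 + 1 \<and>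
     (\<forall>i\<in>{1..m}. is_cycle (D i) \<and> even (card (D i)) \<and> verts (D i) \<subseteq> {1..n} \<and>
        (\<forall>x\<in>D i. snd x = i)) \<and>
     \<not> (\<exists>H. is_cgraph H \<and> H \<subseteq> union_D m D \<and> rainbow_even_cycle H)"

definition better :: "nat \<times> nat \<times> nat \<times> nat \<Rightarrow> nat \<times> nat \<times> nat \<times> nat \<Rightarrow> bool" where
  "better x y \<longleftrightarrow> (case x of (c', b', s', d') \<Rightarrow> case y of (c, b, s, d) \<Rightarrow>
      c' > c \<or> (c' = c \<and> (b' > b \<or> (b' = b \<and> (s' > s \<or> (s' = s \<and> d' < d))))))"

definition params :: "cgraph \<Rightarrow> cgraph list \<Rightarrow> cgraph list \<Rightarrow> cgraph list \<Rightarrow> nat \<times> nat \<times> nat \<times> nat" where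
  "params F Cs Bs Ts = (length Cs, length Bs, card F, total_depth Ts)"

definition extremal_frankenstein ::
  "nat \<Rightarrow> (nat \<Rightarrow> cgraph) \<Rightarrow> cgraph \<Rightarrow> cgraph list \<Rightarrow> cgraph list \<Rightarrow> cgraph list \<Rightarrow> bool" where
  "extremal_frankenstein m D F Cs Bs Ts \<longleftrightarrow>
     F \<subseteq> union_D m D \<and> frankenstein F Cs Bs Ts \<and>
     (\<forall>F' Cs' Bs' Ts'. F' \<subseteq> union_D m D \<and> frankenstein F' Cs' Bs' Ts' \<longrightarrow>
        \<not> better (params F' Cs' Bs' Ts') (params F Cs Bs Ts))"

definition coincident :: "nat set \<times> nat \<Rightarrow> nat set \<times> nat \<Rightarrow> bool" where
  "coincident e f \<longleftrightarrow> fst e = fst f \<and> snd e \<noteq> snd f"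

definition outer_edge :: "nat \<Rightarrow> (nat \<Rightarrow> cgraph) \<Rightarrow> cgraph \<Rightarrow> nat set \<times> nat \<Rightarrow> bool" where
  "outer_edge m D F f \<longleftrightarrow> f \<in> (\<Union>l\<in>{1..m} - colors F. D l) \<and> \<not> (\<exists>g\<in>F. coincident g f)"

definition outer_cycle :: "cgraph \<Rightarrow> nat set \<times> nat \<Rightarrow> cgraph \<Rightarrow> bool" where
  "outer_cycle F f C \<longleftrightarrow> is_cycle C \<and> rainbow C \<and> card C \<in> {3, 5} \<and> C \<subseteq> insert f F \<and> f \<in> C"

end

theory Submission
  imports Defs
begin

text \<open>
  Let \<open>uwv\<close> be the outer triangle of the outer edge \<open>f = uv\<close>. Adding \<open>f\<close> to the extremal
  Frankenstein graph still creates no rainbow even cycle. If the edge \<open>uw\<close> lay in a long odd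
  cycle or a bad piece, then this part contains a rainbow odd cycle through \<open>uw\<close>, and together with
  \<open>f\<close> either the chord \<open>uv\<close> would shortcut the path \<open>u w v\<close> of that cycle, or the detour
  \<open>w v u\<close> would replace its edge \<open>uw\<close>; both give a rainbow even cycle. So \<open>uw\<close>, and likewise
  \<open>wv\<close>, lie in trees, and in the same tree since the trees are vertex-disjoint. Were \<open>u\<close> the
  parent of \<open>w\<close>, exchanging the tree edge \<open>wv\<close> for \<open>f\<close> would give a Frankenstein graph of
  the same size in which no vertex is deeper and \<open>v\<close> is shallower, contradicting the
  minimality of the total depth. Hence \<open>u\<close> and, symmetrically, \<open>v\<close> are children of \<open>w\<close>.
\<close>

section \<open>Edges along vertex lists\<close>

lemma pedges_Nil [simp]: "pedges [] = {}"
  by (simp add: pedges_def)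

lemma pedges_singleton [simp]: "pedges [x] = {}"
  by (simp add: pedges_def)

lemma pedges_Cons_Cons [simp]: "pedges (x # y # zs) = insert {x, y} (pedges (y # zs))"
  by (simp add: pedges_def)

lemma finite_pedges [simp]: "finite (pedges xs)"
  by (simp add: pedges_def)

lemma pedges_append: "pedges (xs @ y # ys) = pedges (xs @ [y]) \<union> pedges (y # ys)"
  by (induction xs rule: induct_list012) auto

lemma pedges_snoc: "xs \<noteq> [] \<Longrightarrow> pedges (xs @ [y]) = insert {last xs, y} (pedges xs)"
  by (induction xs rule: induct_list012) auto

lemma pedges_rev [simp]: "pedges (rev xs) = pedges xs"
proof (induction xs rule: induct_list012)
  case (3 x y zs)
  have "pedges (rev (x # y # zs)) = insert {y, x} (pedges (rev (y # zs)))"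
    using pedges_snoc[of "rev (y # zs)" x] by (simp add: last_rev)
  with 3 show ?case by (simp add: insert_commute)
qed auto

lemma pedges_append_subset_left: "pedges xs \<subseteq> pedges (xs @ ys)"
  by (induction xs rule: induct_list012) auto

lemma pedges_append_subset_right: "pedges ys \<subseteq> pedges (xs @ ys)"
proof (induction xs)
  case (Cons a xs)
  then show ?case by (cases "xs @ ys") auto
qed simp

lemma pedges_subset_set: "e \<in> pedges xs \<Longrightarrow> e \<subseteq> set xs"
  by (induction xs rule: induct_list012) auto

lemma Union_pedges: "length xs \<ge> 2 \<Longrightarrow> \<Union> (pedges xs) = set xs"
proof (induction xs rule: induct_list012)
  case (3 x y zs)
  then show ?case by (cases zs) auto
qed auto

lemma doubleton_notin_pedges: "x \<notin> set xs \<Longrightarrow> {x, y} \<notin> pedges xs"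
  using pedges_subset_set by blast

lemma card_pedges: "distinct xs \<Longrightarrow> card (pedges xs) = length xs - 1"
proof (induction xs rule: induct_list012)
  case (3 x y zs)
  then have "{x, y} \<notin> pedges (y # zs)"
    using doubleton_notin_pedges by auto
  with 3 show ?case by simp
qed auto

lemma in_pedges_split:
  assumes "{a, b} \<in> pedges xs"
  obtains p q where "xs = p @ a # b # q \<or> xs = p @ b # a # q"
  using assms
proof (induction xs arbitrary: thesis rule: induct_list012)
  case (3 x y zs)
  show ?case
  proof (cases "{a, b} = {x, y}")
    case True
    then show ?thesis
      using "3.prems"(1)[of "[]"] by (auto simp: doubleton_eq_iff)
  next
    case False
    then show ?thesis
      using 3 by (metis append_Cons pedges_Cons_Cons insertE)
  qed
qed auto

lemma distinct_last_edge:
  assumes "distinct xs" "last xs = w" "{w, v} \<in> pedges xs" "v \<noteq> w"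
  shows "xs = butlast (butlast xs) @ [v, w]"
proof -
  obtain p q where "xs = p @ w # v # q \<or> xs = p @ v # w # q"
    using assms(3) by (rule in_pedges_split)
  then have "xs = p @ [v, w]"
  proof
    assume "xs = p @ w # v # q"
    then show ?thesis
      using assms(1,2,4) by (cases q rule: rev_cases) auto
  next
    assume "xs = p @ v # w # q"
    then show ?thesis
      using assms(1,2) by (cases q rule: rev_cases) auto
  qed
  then show ?thesis
    by (simp add: butlast_append)
qed

lemma cedges_conv: "xs \<noteq> [] \<Longrightarrow> cedges xs = insert {last xs, hd xs} (pedges xs)"
  by (simp add: cedges_def pedges_snoc)

lemma closing_edge_notin_pedges:
  assumes "distinct xs" "length xs \<ge> 3"
  shows "{last xs, hd xs} \<notin> pedges xs"
proof -
  obtain x y zs where xs: "xs = x # y # zs" and "zs \<noteq> []"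
    using assms(2) by (cases xs; cases "tl xs"; cases "tl (tl xs)") auto
  then have "last xs \<in> set zs" "last xs = last zs" by auto
  with assms(1) xs show ?thesis
    using doubleton_notin_pedges[of x "y # zs" "last zs"]
    by (auto simp: doubleton_eq_iff insert_commute)
qed

lemma card_cedges: "distinct xs \<Longrightarrow> length xs \<ge> 3 \<Longrightarrow> card (cedges xs) = length xs"
  using closing_edge_notin_pedges[of xs] card_pedges[of xs]
  by (cases xs) (auto simp: cedges_conv)

lemma pedges_eq_cedges_Diff:
  "distinct xs \<Longrightarrow> length xs \<ge> 3 \<Longrightarrow> pedges xs = cedges xs - {{last xs, hd xs}}"
  using closing_edge_notin_pedges[of xs] by (cases xs) (auto simp: cedges_conv)

lemma Union_cedges: "length xs \<ge> 2 \<Longrightarrow> \<Union> (cedges xs) = set xs"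
  using Union_pedges[of xs] by (cases xs) (auto simp: cedges_conv)

lemma cedges_rev [simp]: "cedges (rev xs) = cedges xs"
  by (cases "xs = []") (auto simp: cedges_conv hd_rev last_rev insert_commute)

lemma cedges_rotate1 [simp]: "cedges (rotate1 xs) = cedges xs"
proof (cases xs)
  case (Cons x ys)
  then show ?thesis
    by (cases "ys = []") (auto simp: cedges_conv pedges_snoc insert_commute neq_Nil_conv)
qed simp

lemma cedges_rotate [simp]: "cedges (rotate n xs) = cedges xs"
  by (induction n) auto

lemma cedges_rotate_to_edge:
  assumes "distinct xs" "xs @ [hd xs] = p @ a # b # q"
  obtains ys where "distinct ys" "length ys = length xs" "cedges ys = cedges xs"
    "hd ys = b" "last ys = a"
proof (cases "q = []")
  case True
  with assms(2) have "xs = p @ [a]" "hd xs = b" by auto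
  with assms(1) that[of xs] show ?thesis by simp
next
  case False
  with assms(2) have "xs = (p @ [a]) @ b # butlast q"
    by (metis append.assoc append_Cons append_Nil butlast_append butlast_snoc list.distinct(1))
  then have "rotate (length (p @ [a])) xs = b # butlast q @ p @ [a]"
    by (metis rotate_append append.assoc append_Cons)
  with assms(1) that[of "rotate (length (p @ [a])) xs"] show ?thesis by simp
qed

lemma cedges_orient:
  assumes "distinct xs" "{a, b} \<in> cedges xs"
  obtains ys where "distinct ys" "length ys = length xs" "cedges ys = cedges xs"
    "hd ys = a" "last ys = b"
proof -
  obtain p q where "xs @ [hd xs] = p @ a # b # q \<or> xs @ [hd xs] = p @ b # a # q"
    using assms(2) in_pedges_split unfolding cedges_def by metis
  then show ?thesis
  proof
    assume "xs @ [hd xs] = p @ a # b # q"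
    then obtain ys where "distinct ys" "length ys = length xs" "cedges ys = cedges xs"
      "hd ys = b" "last ys = a"
      using cedges_rotate_to_edge assms(1) by blast
    then show ?thesis
      using that[of "rev ys"] by (simp add: hd_rev last_rev)
  next
    assume "xs @ [hd xs] = p @ b # a # q"
    then show ?thesis
      using cedges_rotate_to_edge assms(1) that by blast
  qed
qed

lemma is_cgraph_subset: "is_cgraph G \<Longrightarrow> H \<subseteq> G \<Longrightarrow> is_cgraph H"
  unfolding is_cgraph_def by (meson finite_subset subsetD)

lemma is_cgraph_finite: "is_cgraph G \<Longrightarrow> finite G"
  by (simp add: is_cgraph_def)

lemma is_cgraph_eq: "is_cgraph G \<Longrightarrow> x \<in> G \<Longrightarrow> y \<in> G \<Longrightarrow> fst x = fst y \<Longrightarrow> x = y"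
  unfolding is_cgraph_def by blast

lemma is_cgraph_card_uedges: "is_cgraph G \<Longrightarrow> card (uedges G) = card G"
  unfolding uedges_def by (metis card_image inj_onI is_cgraph_eq)

lemma is_cgraph_insert:
  assumes "is_cgraph G" "card (fst f) = 2" "fst f \<notin> uedges G"
  shows "is_cgraph (insert f G)"
  using assms unfolding is_cgraph_def uedges_def by (auto simp: rev_image_eqI)

lemma finite_verts: "is_cgraph G \<Longrightarrow> finite (verts G)"
  unfolding is_cgraph_def verts_def by (metis card.infinite finite_UN_I zero_neq_numeral)

lemma uedges_Diff:
  assumes "is_cgraph G" "S \<subseteq> G"
  shows "uedges (G - S) = uedges G - fst ` S"
  using assms is_cgraph_eq unfolding uedges_def by blast

lemma uedges_insert [simp]: "uedges (insert x G) = insert (fst x) (uedges G)"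
  by (simp add: uedges_def)

lemma uedges_Un [simp]: "uedges (G \<union> H) = uedges G \<union> uedges H"
  by (simp add: uedges_def image_Un)

lemma verts_Un [simp]: "verts (G \<union> H) = verts G \<union> verts H"
  by (simp add: verts_def)

lemma verts_conv_uedges: "verts G = \<Union> (uedges G)"
  by (simp add: verts_def uedges_def)

lemma verts_mono: "H \<subseteq> G \<Longrightarrow> verts H \<subseteq> verts G"
  by (auto simp: verts_def)

lemma uedges_mono: "H \<subseteq> G \<Longrightarrow> uedges H \<subseteq> uedges G"
  by (auto simp: uedges_def)

lemma colors_mono: "H \<subseteq> G \<Longrightarrow> colors H \<subseteq> colors G"
  by (auto simp: colors_def)

lemma snd_in_colors: "x \<in> G \<Longrightarrow> snd x \<in> colors G"
  by (auto simp: colors_def)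

lemma fst_in_uedges: "x \<in> G \<Longrightarrow> fst x \<in> uedges G"
  by (auto simp: uedges_def)

lemma in_verts: "x \<in> G \<Longrightarrow> a \<in> fst x \<Longrightarrow> a \<in> verts G"
  by (auto simp: verts_def)

lemma uedgesE: "e \<in> uedges G \<Longrightarrow> (\<And>x. x \<in> G \<Longrightarrow> fst x = e \<Longrightarrow> P) \<Longrightarrow> P"
  by (auto simp: uedges_def)

lemma rainbow_iff_inj_on: "finite G \<Longrightarrow> rainbow G \<longleftrightarrow> inj_on snd G"
  unfolding rainbow_def colors_def using inj_on_iff_eq_card by metis

lemma rainbow_insert:
  assumes "finite G" "rainbow G" "snd f \<notin> colors G"
  shows "rainbow (insert f G)"
  using assms unfolding rainbow_iff_inj_on[OF finite.insertI[OF assms(1)]] rainbow_iff_inj_on[OF assms(1)]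
  by (auto simp: colors_def)

lemma rainbow_subset: "finite G \<Longrightarrow> rainbow G \<Longrightarrow> H \<subseteq> G \<Longrightarrow> rainbow H"
  by (meson finite_subset inj_on_subset rainbow_iff_inj_on)

lemma rainbow_insert_Diff:
  assumes "finite G" "rainbow G" "snd f \<notin> colors G"
  shows "rainbow (insert f (G - S))"
proof -
  have "finite (G - S)" "rainbow (G - S)" "colors (G - S) \<subseteq> colors G"
    using assms(1) rainbow_subset[OF assms(1,2)] colors_mono by auto
  with assms(3) show ?thesis
    using rainbow_insert by blast
qed

lemma cycle_card_eq:
  "is_cycle Y \<Longrightarrow> uedges Y = cedges xs \<Longrightarrow> distinct xs \<Longrightarrow> length xs \<ge> 3 \<Longrightarrow> card Y = length xs"
  using is_cgraph_card_uedges card_cedges is_cycle_def by metis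

lemma is_cycle_cgraph: "is_cycle Y \<Longrightarrow> is_cgraph Y"
  by (simp add: is_cycle_def)

lemma is_cycle_finite: "is_cycle Y \<Longrightarrow> finite Y"
  by (simp add: is_cycle_cgraph is_cgraph_finite)

lemma cycle_open_at_edge:
  assumes "is_cycle Y" "e \<in> Y" "fst e = {x, y}"
  obtains xs where "distinct xs" "length xs = card Y" "length xs \<ge> 3" "hd xs = x" "last xs = y"
    "pedges xs = uedges Y - {{x, y}}"
proof -
  obtain zs where zs: "distinct zs" "length zs \<ge> 3" "uedges Y = cedges zs"
    using assms(1) is_cycle_def by blast
  have "{x, y} \<in> cedges zs"
    using zs assms fst_in_uedges by metis
  then obtain xs where xs: "distinct xs" "length xs = length zs" "cedges xs = cedges zs"
    "hd xs = x" "last xs = y"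
    using cedges_orient zs(1) by blast
  have "pedges xs = uedges Y - {{x, y}}"
    using pedges_eq_cedges_Diff[of xs] xs zs by (simp add: insert_commute)
  moreover have "card Y = length zs"
    using cycle_card_eq assms(1) zs by blast
  ultimately show ?thesis
    using that xs zs by simp
qed

lemma set_subset_verts: "length xs \<ge> 2 \<Longrightarrow> pedges xs \<subseteq> uedges Y \<Longrightarrow> set xs \<subseteq> verts Y"
  using Union_pedges[of xs] verts_conv_uedges[of Y] by blast

lemma is_cycle_of_cedges:
  assumes "is_cgraph H" "uedges H = cedges xs" "distinct xs" "length xs \<ge> 3"
  shows "is_cycle H" "card H = length xs"
  using assms cycle_card_eq unfolding is_cycle_def by blast+

section \<open>Graphs without rainbow even cycles\<close>

definition rainbow_even_cycle_free :: "cgraph \<Rightarrow> bool" where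
  "rainbow_even_cycle_free G \<longleftrightarrow> is_cgraph G \<and> (\<forall>H\<subseteq>G. \<not> rainbow_even_cycle H)"

lemma rainbow_even_cycle_free_odd_cycle:
  assumes "rainbow_even_cycle_free G" "H \<subseteq> G" "uedges H = cedges ys" "distinct ys"
    "length ys \<ge> 3" "rainbow H"
  shows "odd (length ys)"
proof -
  have "is_cgraph H"
    using assms(1,2) is_cgraph_subset rainbow_even_cycle_free_def by blast
  with assms show ?thesis
    using is_cycle_of_cedges unfolding rainbow_even_cycle_free_def rainbow_even_cycle_def by metis
qed

lemma rainbow_even_cycle_free_odd_card:
  "rainbow_even_cycle_free G \<Longrightarrow> Y \<subseteq> G \<Longrightarrow> is_cycle Y \<Longrightarrow> rainbow Y \<Longrightarrow> odd (card Y)"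
  unfolding rainbow_even_cycle_free_def rainbow_even_cycle_def by blast

lemma cycle_detour:
  assumes cyc: "is_cycle Y" and ea: "ea \<in> Y" "fst ea = {x, y}" and z: "z \<notin> verts Y"
    and "fst eb = {y, z}" "fst ec = {z, x}"
  obtains ys where "distinct ys" "length ys = card Y + 1" "length ys \<ge> 3"
    "uedges (insert ec (insert eb (Y - {ea}))) = cedges ys"
proof -
  obtain xs where xs: "distinct xs" "length xs = card Y" "length xs \<ge> 3" "hd xs = x" "last xs = y"
    "pedges xs = uedges Y - {{x, y}}"
    using cycle_open_at_edge[OF cyc ea] by blast
  have "z \<notin> set xs"
    using z set_subset_verts[of xs Y] xs by auto
  then have ys: "distinct (xs @ [z])" "length (xs @ [z]) = card Y + 1" "length (xs @ [z]) \<ge> 3"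
    using xs by auto
  have "uedges (Y - {ea}) = uedges Y - {{x, y}}"
    using uedges_Diff[OF is_cycle_cgraph[OF cyc], of "{ea}"] ea by simp
  then have "uedges (insert ec (insert eb (Y - {ea}))) = insert {z, x} (insert {y, z} (pedges xs))"
    using xs(6) assms(5,6) by simp
  also have "\<dots> = cedges (xs @ [z])"
  proof -
    have "xs \<noteq> []"
      using xs(3) by auto
    then show ?thesis
      using xs(4,5) cedges_conv[of "xs @ [z]"] pedges_snoc[of xs z] by simp
  qed
  finally show ?thesis
    using that ys by blast
qed

text \<open>Replacing the edge \<open>xy\<close> of an odd rainbow cycle by a detour \<open>y z x\<close> through a new vertex
  would give an even cycle, which the new colors keep rainbow.\<close>

lemma rainbow_cycle_no_detour:
  assumes free: "rainbow_even_cycle_free G" and YG: "Y \<subseteq> G" and cyc: "is_cycle Y" and "rainbow Y"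
    and ea: "ea \<in> Y" "fst ea = {x, y}" and z: "z \<notin> verts Y"
    and eb: "eb \<in> G" "fst eb = {y, z}" and ec: "ec \<in> G" "fst ec = {z, x}"
    and col: "snd eb \<noteq> snd ec" "snd eb \<notin> colors Y" "snd ec \<notin> colors Y"
  shows False
proof -
  obtain ys where ys: "distinct ys" "length ys = card Y + 1" "length ys \<ge> 3"
    "uedges (insert ec (insert eb (Y - {ea}))) = cedges ys"
    using cycle_detour[OF cyc ea z eb(2) ec(2)] by blast
  have "rainbow (insert eb (Y - {ea}))"
    using rainbow_insert_Diff[OF is_cycle_finite[OF cyc] \<open>rainbow Y\<close> col(2)] .
  moreover have "snd ec \<notin> colors (insert eb (Y - {ea}))"
    using col colors_mono[of "Y - {ea}" Y] by (auto simp: colors_def)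
  ultimately have "rainbow (insert ec (insert eb (Y - {ea})))"
    using rainbow_insert is_cycle_finite[OF cyc] by simp
  moreover have "insert ec (insert eb (Y - {ea})) \<subseteq> G"
    using YG eb(1) ec(1) by blast
  ultimately have "odd (length ys)"
    using rainbow_even_cycle_free_odd_cycle[OF free _ ys(4,1,3)] by blast
  with ys(2) show False
    using rainbow_even_cycle_free_odd_card[OF free YG cyc \<open>rainbow Y\<close>] by simp
qed

lemma cycle_shortcut:
  assumes cyc: "is_cycle Y" and e1: "e1 \<in> Y" "fst e1 = {u, w}" and e2: "e2 \<in> Y" "fst e2 = {w, v}"
    and f: "fst f = {u, v}" "{u, v} \<notin> uedges Y" and "u \<noteq> v"
  obtains ys where "distinct ys" "length ys + 1 = card Y" "length ys \<ge> 3"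
    "uedges (insert f (Y - {e1, e2})) = cedges ys"
proof -
  have cgY: "is_cgraph Y"
    using is_cycle_cgraph[OF cyc] .
  obtain xs where xs: "distinct xs" "length xs = card Y" "length xs \<ge> 3" "hd xs = u" "last xs = w"
    "pedges xs = uedges Y - {{u, w}}"
    using cycle_open_at_edge[OF cyc e1] by blast
  have "card (fst e2) = 2"
    using e2(1) cgY unfolding is_cgraph_def by blast
  then have "v \<noteq> w"
    using e2(2) by auto
  have wv: "{w, v} \<in> pedges xs"
    using xs(6) fst_in_uedges[OF e2(1)] e2(2) \<open>u \<noteq> v\<close> by (auto simp: doubleton_eq_iff)
  define p where "p = butlast (butlast xs)"
  have xs_eq: "xs = p @ [v, w]"
    unfolding p_def using distinct_last_edge[OF xs(1,5) wv \<open>v \<noteq> w\<close>] .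
  then have "p \<noteq> []"
    using xs(4) \<open>u \<noteq> v\<close> by auto
  then have "hd p = u"
    using xs_eq xs(4) by simp
  have "p \<noteq> [u]"
  proof
    assume "p = [u]"
    then have "{u, v} \<in> pedges xs"
      using xs_eq by simp
    with xs(6) f(2) show False
      by blast
  qed
  with \<open>p \<noteq> []\<close> \<open>hd p = u\<close> have "length p \<ge> 2"
    by (cases p rule: remdups_adj.cases) auto
  have dist: "distinct (p @ [v])" "w \<notin> set (p @ [v])"
    using xs(1) xs_eq by auto
  have "pedges xs = insert {w, v} (pedges (p @ [v]))"
    using xs_eq pedges_snoc[of "p @ [v]" w] by (simp add: insert_commute)
  then have "pedges (p @ [v]) = uedges Y - {{u, w}, {w, v}}"
    using xs(6) doubleton_notin_pedges[OF dist(2), of v] by blast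
  also have "\<dots> = uedges (Y - {e1, e2})"
    using uedges_Diff[OF cgY, of "{e1, e2}"] e1 e2 by simp
  finally have "uedges (insert f (Y - {e1, e2})) = insert {u, v} (pedges (p @ [v]))"
    using f(1) by simp
  also have "\<dots> = cedges (p @ [v])"
    using \<open>hd p = u\<close> \<open>p \<noteq> []\<close> by (simp add: cedges_conv insert_commute)
  finally have "uedges (insert f (Y - {e1, e2})) = cedges (p @ [v])" .
  moreover have "length (p @ [v]) + 1 = card Y" "length (p @ [v]) \<ge> 3"
    using xs(2) xs_eq \<open>length p \<ge> 2\<close> by simp_all
  ultimately show ?thesis
    using that dist(1) by blast
qed

text \<open>A chord \<open>uv\<close> of a new color across the path \<open>u w v\<close> of an odd rainbow cycle would
  shortcut it to an even rainbow cycle.\<close>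

lemma rainbow_cycle_no_shortcut:
  assumes free: "rainbow_even_cycle_free G" and YG: "Y \<subseteq> G" and cyc: "is_cycle Y" and "rainbow Y"
    and e1: "e1 \<in> Y" "fst e1 = {u, w}" and e2: "e2 \<in> Y" "fst e2 = {w, v}"
    and f: "f \<in> G" "fst f = {u, v}" "snd f \<notin> colors Y" "{u, v} \<notin> uedges Y" and "u \<noteq> v"
  shows False
proof -
  obtain ys where ys: "distinct ys" "length ys + 1 = card Y" "length ys \<ge> 3"
    "uedges (insert f (Y - {e1, e2})) = cedges ys"
    using cycle_shortcut[OF cyc e1 e2 f(2,4) \<open>u \<noteq> v\<close>] by blast
  have "rainbow (insert f (Y - {e1, e2}))"
    using rainbow_insert_Diff[OF is_cycle_finite[OF cyc] \<open>rainbow Y\<close> f(3)] .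
  moreover have "insert f (Y - {e1, e2}) \<subseteq> G"
    using YG f(1) by blast
  ultimately have "odd (length ys)"
    using rainbow_even_cycle_free_odd_cycle[OF free _ ys(4,1,3)] by blast
  moreover have "odd (card Y)"
    using rainbow_even_cycle_free_odd_card[OF free YG cyc \<open>rainbow Y\<close>] .
  ultimately show False
    using ys(2) by presburger
qed

section \<open>Theta graphs and bad pieces\<close>

lemma is_theta_swap12: "is_theta P Q R s t \<Longrightarrow> is_theta Q P R s t"
  unfolding is_theta_def by (auto simp: Int_commute)

lemma is_theta_swap23: "is_theta P Q R s t \<Longrightarrow> is_theta P R Q s t"
  unfolding is_theta_def by (auto simp: Int_commute)

lemma is_theta_disjoint:
  assumes "is_theta P Q R s t"
  shows "P \<inter> Q = {}" "P \<inter> R = {}" "Q \<inter> R = {}"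
  using assms fst_in_uedges unfolding is_theta_def by blast+

lemma is_pathE:
  assumes "is_path P s t"
  obtains mid where "distinct (s # mid @ [t])" "uedges P = pedges (s # mid @ [t])"
    "verts P = set (s # mid @ [t])"
proof -
  obtain xs where xs: "distinct xs" "length xs \<ge> 2" "hd xs = s" "last xs = t"
    "uedges P = pedges xs"
    using assms is_path_def by blast
  then have "verts P = set xs"
    using Union_pedges verts_conv_uedges by metis
  moreover obtain a r where "xs = a # r" "r \<noteq> []"
    using xs(2) by (auto simp: numeral_2_eq_2 Suc_le_length_iff)
  moreover obtain mid b where "r = mid @ [b]"
    using \<open>r \<noteq> []\<close> by (cases r rule: rev_cases) auto
  ultimately show ?thesis
    using that[of mid] xs by simp
qed

lemma theta_union_is_cycle:
  assumes th: "is_theta P Q R s t" and "is_cgraph (P \<union> Q)"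
  shows "is_cycle (P \<union> Q)"
proof -
  have "is_path P s t" "is_path Q s t"
    using th unfolding is_theta_def by blast+
  obtain mp where xp: "distinct (s # mp @ [t])" "uedges P = pedges (s # mp @ [t])"
      "verts P = set (s # mp @ [t])"
    using is_pathE[OF \<open>is_path P s t\<close>] by blast
  obtain mq where xq: "distinct (s # mq @ [t])" "uedges Q = pedges (s # mq @ [t])"
      "verts Q = set (s # mq @ [t])"
    using is_pathE[OF \<open>is_path Q s t\<close>] by blast
  define xs where "xs = s # mp @ [t] @ rev mq"
  have "verts P \<inter> verts Q = {s, t}"
    using th unfolding is_theta_def by blast
  moreover have "set mq \<subseteq> verts Q - {s, t}"
    using xq(1,3) by auto
  ultimately have "set mq \<inter> set (s # mp @ [t]) = {}"
    using xp(3) by blast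
  then have dist: "distinct xs"
    using xp(1) xq(1) by (auto simp: xs_def)
  have "xs @ [hd xs] = (s # mp) @ t # (rev mq @ [s])"
    by (simp add: xs_def)
  then have "cedges xs = pedges ((s # mp) @ [t]) \<union> pedges (t # rev mq @ [s])"
    unfolding cedges_def by (simp only: pedges_append[of "s # mp" t "rev mq @ [s]"])
  also have "\<dots> = uedges (P \<union> Q)"
    using xp(2) xq(2) pedges_rev[of "s # mq @ [t]"] by simp
  finally have ce: "cedges xs = uedges (P \<union> Q)" .
  have "length xs \<ge> 3"
  proof (rule ccontr)
    assume "\<not> 3 \<le> length xs"
    moreover have "length xs = length mp + length mq + 2"
      by (simp add: xs_def)
    ultimately have "length mp + length mq = 0"
      by linarith
    then have "mp = []" "mq = []"
      by simp_all
    then have "uedges P = {{s, t}}" "uedges Q = {{s, t}}"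
      using xp(2) xq(2) by simp_all
    with th show False
      unfolding is_theta_def by auto
  qed
  with assms(2) dist ce show ?thesis
    unfolding is_cycle_def by metis
qed

lemma is_path_single_edge:
  assumes "is_path P s t" "e \<in> P" "fst e = {s, t}"
  shows "P = {e}"
proof -
  obtain mid where xs: "distinct (s # mid @ [t])" "uedges P = pedges (s # mid @ [t])"
    using is_pathE[OF assms(1)] by blast
  have "{s, t} \<in> pedges (s # mid @ [t])"
    using xs(2) fst_in_uedges[OF assms(2)] assms(3) by simp
  then obtain p q where "s # mid @ [t] = p @ s # t # q \<or> s # mid @ [t] = p @ t # s # q"
    by (rule in_pedges_split)
  then have "mid = []"
  proof
    assume split: "s # mid @ [t] = p @ s # t # q"
    then have "p = []"
      using xs(1) by (cases p) auto
    with split xs(1) show ?thesis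
      by (cases mid) auto
  next
    assume "s # mid @ [t] = p @ t # s # q"
    with xs(1) show ?thesis
      by (cases p) auto
  qed
  then have "uedges P = {{s, t}}"
    using xs(2) by simp
  moreover have "is_cgraph P"
    using assms(1) unfolding is_path_def by blast
  ultimately have "g = e" if "g \<in> P" for g
    using that assms(2,3) is_cgraph_eq fst_in_uedges by (metis singletonD)
  then show ?thesis
    using assms(2) by blast
qed

lemma almost_rainbow_Diff_collision:
  assumes "finite B" "almost_rainbow B" "g \<in> B" "h \<in> B" "g \<noteq> h" "snd g = snd h"
  shows "inj_on snd (B - {g})"
proof -
  have "snd ` (B - {g}) = snd ` B"
    using assms(3-6) by (auto intro: rev_image_eqI[of h])
  moreover have "card (B - {g}) = card B - 1"
    using assms(1,3) by simp
  ultimately have "card (snd ` (B - {g})) = card (B - {g})"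
    using assms(2) by (simp add: almost_rainbow_def colors_def)
  then show ?thesis
    using inj_on_iff_eq_card assms(1) by blast
qed

lemma almost_rainbow_collision_unique:
  assumes fin: "finite B" and ar: "almost_rainbow B"
    and gh: "g \<in> B" "h \<in> B" "g \<noteq> h" "snd g = snd h"
    and gh': "g' \<in> B" "h' \<in> B" "g' \<noteq> h'" "snd g' = snd h'"
  shows "{g', h'} = {g, h}"
proof -
  have "g \<in> {g', h'}"
    using almost_rainbow_Diff_collision[OF fin ar gh] gh' unfolding inj_on_def by blast
  moreover have "h \<in> {g', h'}"
    using almost_rainbow_Diff_collision[OF fin ar gh(2,1) gh(3)[symmetric] gh(4)[symmetric]] gh'
    unfolding inj_on_def by blast
  ultimately show ?thesis
    using gh(3) by auto
qed

definition bad_piece_on :: "cgraph \<Rightarrow> cgraph \<Rightarrow> cgraph \<Rightarrow> nat \<Rightarrow> nat \<Rightarrow> cgraph \<Rightarrow> bool" where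
  "bad_piece_on P Q R s t B \<longleftrightarrow> is_theta P Q R s t \<and> rainbow P \<and> rainbow Q \<and> rainbow R \<and>
     B = P \<union> Q \<union> R \<and> is_cgraph B \<and> almost_rainbow B"

lemma bad_piece_on_swap12: "bad_piece_on P Q R s t B \<Longrightarrow> bad_piece_on Q P R s t B"
  unfolding bad_piece_on_def using is_theta_swap12 by (auto simp: Un_ac)

lemma bad_piece_on_swap23: "bad_piece_on P Q R s t B \<Longrightarrow> bad_piece_on P R Q s t B"
  unfolding bad_piece_on_def using is_theta_swap23 by (auto simp: Un_ac)

lemma bad_pieceE:
  assumes "bad_piece B"
  obtains P Q R s t where "bad_piece_on P Q R s t B"
  using assms unfolding bad_piece_def bad_piece_on_def by blast

lemma bad_piece_onD:
  assumes "bad_piece_on P Q R s t B"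
  shows "is_theta P Q R s t" "P \<subseteq> B" "Q \<subseteq> B" "R \<subseteq> B" "finite B" "almost_rainbow B"
    "is_cgraph B" "inj_on snd P" "inj_on snd Q"
  using assms unfolding bad_piece_on_def
  by (auto simp: rainbow_iff_inj_on is_cgraph_def intro: finite_subset)

lemma bad_piece_on_cycle:
  assumes "bad_piece_on P Q R s t B"
  shows "is_cycle (P \<union> Q)"
proof -
  have "is_cgraph (P \<union> Q)"
    using is_cgraph_subset bad_piece_onD[OF assms] by (meson Un_least)
  then show ?thesis
    using theta_union_is_cycle bad_piece_onD(1)[OF assms] by blast
qed

text \<open>A bad piece has a single pair of edges of equal color, so at most one of its three cycles
  fails to be rainbow.\<close>

lemma bad_piece_on_rainbow_cycles:
  assumes bp: "bad_piece_on P Q R s t B" and "\<not> rainbow (P \<union> Q)"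
  shows "rainbow (P \<union> R)" "rainbow (Q \<union> R)"
proof -
  note B = bad_piece_onD[OF bp]
  have fin: "finite (P \<union> Q)" "finite (P \<union> R)" "finite (Q \<union> R)"
    using B(2-5) finite_subset by (meson Un_least)+
  have d: "P \<inter> Q = {}" "P \<inter> R = {}" "Q \<inter> R = {}"
    using is_theta_disjoint B(1) by auto
  obtain a b where ab: "a \<in> P \<union> Q" "b \<in> P \<union> Q" "a \<noteq> b" "snd a = snd b"
    using assms(2) unfolding rainbow_iff_inj_on[OF fin(1)] inj_on_def by blast
  have "a \<in> B" "b \<in> B"
    using ab B(2,3) by auto
  note unique = almost_rainbow_collision_unique[OF B(5,6) this ab(3,4)]
  have inj: "inj_on snd X" if "X \<subseteq> B" "\<not> (a \<in> X \<and> b \<in> X)" for X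
  proof (rule inj_onI, rule ccontr)
    fix c c' assume c: "c \<in> X" "c' \<in> X" "snd c = snd c'" "c \<noteq> c'"
    then have "{c, c'} = {a, b}"
      using unique[OF _ _ c(4) c(3)] that(1) by blast
    then have "a \<in> X" "b \<in> X"
      using c(1,2) by (auto simp: doubleton_eq_iff)
    with that(2) show False
      by blast
  qed
  have "\<not> (a \<in> P \<and> b \<in> P)" "\<not> (a \<in> Q \<and> b \<in> Q)"
    using B(8,9) ab(3,4) unfolding inj_on_def by blast+
  then have "\<not> (a \<in> P \<union> R \<and> b \<in> P \<union> R)" "\<not> (a \<in> Q \<union> R \<and> b \<in> Q \<union> R)"
    using ab(1,2) d by blast+
  then show "rainbow (P \<union> R)" "rainbow (Q \<union> R)"
    using inj B(2-4) rainbow_iff_inj_on fin(2,3) by (metis Un_least)+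
qed

lemma bad_piece_on_rainbow_cycle_containing:
  assumes bp: "bad_piece_on P Q R s t B"
  obtains Y where "Y \<subseteq> B" "is_cycle Y" "rainbow Y" "P \<subseteq> Y"
proof (cases "rainbow (P \<union> Q)")
  case True
  then show ?thesis
    using that[of "P \<union> Q"] bad_piece_on_cycle[OF bp] bad_piece_onD[OF bp] by blast
next
  case False
  then show ?thesis
    using that[of "P \<union> R"] bad_piece_on_cycle[OF bad_piece_on_swap23[OF bp]]
      bad_piece_on_rainbow_cycles[OF bp] bad_piece_onD[OF bp] by blast
qed

lemma bad_piece_edge_in_rainbow_cycle:
  assumes "bad_piece B" "e \<in> B"
  obtains Y where "Y \<subseteq> B" "is_cycle Y" "rainbow Y" "e \<in> Y"
proof -
  obtain P Q R s t where bp: "bad_piece_on P Q R s t B"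
    using assms(1) by (rule bad_pieceE)
  then have "e \<in> P \<or> e \<in> Q \<or> e \<in> R"
    using assms(2) unfolding bad_piece_on_def by blast
  moreover have "bad_piece_on Q P R s t B" "bad_piece_on R P Q s t B"
    using bp bad_piece_on_swap12 bad_piece_on_swap23 by blast+
  ultimately obtain P' Q' R' where bp': "bad_piece_on P' Q' R' s t B" and "e \<in> P'"
    using bp by blast
  obtain Y where "Y \<subseteq> B" "is_cycle Y" "rainbow Y" "P' \<subseteq> Y"
    using bad_piece_on_rainbow_cycle_containing[OF bp'] by blast
  with \<open>e \<in> P'\<close> show ?thesis
    using that by blast
qed

lemma bad_piece_on_no_shortcut_within:
  assumes free: "rainbow_even_cycle_free G" and "B \<subseteq> G" and bp: "bad_piece_on P Q R s t B"
    and e1: "e1 \<in> P" "fst e1 = {u, w}" and e2: "e2 \<in> P" "fst e2 = {w, v}"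
    and f: "f \<in> G" "fst f = {u, v}" "snd f \<notin> colors B" "{u, v} \<notin> uedges B" and "u \<noteq> v"
  shows False
proof -
  obtain Y where Y: "Y \<subseteq> B" "is_cycle Y" "rainbow Y" "P \<subseteq> Y"
    using bad_piece_on_rainbow_cycle_containing[OF bp] by blast
  have "snd f \<notin> colors Y" "{u, v} \<notin> uedges Y"
    using f(3,4) colors_mono[OF Y(1)] uedges_mono[OF Y(1)] by blast+
  moreover have "Y \<subseteq> G" "e1 \<in> Y" "e2 \<in> Y"
    using Y(1,4) \<open>B \<subseteq> G\<close> e1(1) e2(1) by blast+
  ultimately show False
    using rainbow_cycle_no_shortcut[OF free _ Y(2,3) _ e1(2) _ e2(2) f(1,2) _ _ \<open>u \<noteq> v\<close>]
    by blast
qed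

lemma bad_piece_on_collision_partner:
  assumes bp: "bad_piece_on P Q R s t B" and "rainbow (P \<union> R)"
    and "e \<in> P" "h \<in> Q \<union> R" "snd h = snd e"
  shows "h \<in> Q"
proof (rule ccontr)
  note B = bad_piece_onD[OF bp]
  assume "h \<notin> Q"
  then have "h \<in> P \<union> R" "h \<noteq> e"
    using assms(3,4) is_theta_disjoint[OF B(1)] by auto
  moreover have "finite (P \<union> R)"
    using B(2,4,5) by (meson Un_least finite_subset)
  then have "inj_on snd (P \<union> R)"
    using assms(2) rainbow_iff_inj_on by blast
  ultimately show False
    using inj_onD[of snd "P \<union> R" h e] assms(3,5) by blast
qed

text \<open>If the chord \<open>uv\<close> spans the paths \<open>P\<close> and \<open>Q\<close> of a bad piece at \<open>w\<close>, then the edge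
  \<open>wv\<close> of \<open>Q\<close> is all of \<open>Q\<close> or repeats a color of the cycle \<open>P \<union> R\<close>: otherwise the detour
  \<open>w v u\<close> around the edge \<open>uw\<close> of that cycle would be rainbow.\<close>

lemma bad_piece_on_shortcut_side:
  assumes free: "rainbow_even_cycle_free G" and "B \<subseteq> G" and bp: "bad_piece_on P Q R s t B"
    and "rainbow (P \<union> R)"
    and e1: "e1 \<in> P" "fst e1 = {u, w}" and e2: "e2 \<in> Q" "fst e2 = {w, v}"
    and f: "f \<in> G" "fst f = {u, v}" "snd f \<notin> colors B"
  shows "Q = {e2} \<or> snd e2 \<in> colors (P \<union> R)"
proof (rule disjCI)
  assume e2_col: "snd e2 \<notin> colors (P \<union> R)"
  note B = bad_piece_onD[OF bp]
  have vts: "verts P \<inter> verts Q = {s, t}" "verts Q \<inter> verts R = {s, t}" "is_path Q s t"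
    using B(1) unfolding is_theta_def by blast+
  have "w \<in> {s, t}"
    using vts(1) in_verts[OF e1(1)] in_verts[OF e2(1)] e1(2) e2(2) by blast
  have "card (fst e2) = 2"
    using B(3,7) e2(1) unfolding is_cgraph_def by blast
  then have "v \<noteq> w"
    using e2(2) by auto
  show "Q = {e2}"
  proof (cases "v \<in> {s, t}")
    case True
    with \<open>w \<in> {s, t}\<close> \<open>v \<noteq> w\<close> have "fst e2 = {s, t}"
      using e2(2) by auto
    then show ?thesis
      using is_path_single_edge[OF vts(3) e2(1)] by blast
  next
    case False
    then have v: "v \<notin> verts (P \<union> R)"
      using vts in_verts[OF e2(1)] e2(2) by auto
    have PR: "P \<union> R \<subseteq> G" "e1 \<in> P \<union> R"
      using B(2,4) \<open>B \<subseteq> G\<close> e1(1) by blast+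
    have e2G: "e2 \<in> B" "e2 \<in> G"
      using e2(1) B(3) \<open>B \<subseteq> G\<close> by blast+
    have "snd f \<notin> colors (P \<union> R)"
      using f(3) colors_mono[of "P \<union> R" B] B(2,4) by blast
    moreover have "snd e2 \<noteq> snd f"
      using f(3) snd_in_colors[OF e2G(1)] by metis
    moreover have "fst f = {v, u}"
      using f(2) by (simp add: insert_commute)
    ultimately show ?thesis
      using rainbow_cycle_no_detour[OF free PR(1) bad_piece_on_cycle[OF bad_piece_on_swap23[OF bp]]
          \<open>rainbow (P \<union> R)\<close> PR(2) e1(2) v e2G(2) e2(2) f(1)] e2_col
      by blast
  qed
qed

lemma bad_piece_on_shortcut_partner:
  assumes free: "rainbow_even_cycle_free G" and "B \<subseteq> G" and bp: "bad_piece_on P Q R s t B"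
    and "\<not> rainbow (P \<union> Q)"
    and e1: "e1 \<in> P" "fst e1 = {u, w}" and e2: "e2 \<in> Q" "fst e2 = {w, v}"
    and f: "f \<in> G" "fst f = {u, v}" "snd f \<notin> colors B"
  shows "Q = {e2} \<or> (\<exists>g\<in>P. snd g = snd e2)"
proof -
  have rPR: "rainbow (P \<union> R)" and rQR: "rainbow (Q \<union> R)"
    using bad_piece_on_rainbow_cycles[OF bp \<open>\<not> rainbow (P \<union> Q)\<close>] by blast+
  have "Q = {e2} \<or> snd e2 \<in> snd ` (P \<union> R)"
    using bad_piece_on_shortcut_side[OF free \<open>B \<subseteq> G\<close> bp rPR e1 e2 f] by (simp add: colors_def)
  moreover have "g \<in> P" if "g \<in> P \<union> R" "snd g = snd e2" for g
    using bad_piece_on_collision_partner[OF bad_piece_on_swap12[OF bp] rQR e2(1)] that by blast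
  ultimately show ?thesis
    by (metis imageE)
qed

text \<open>If \<open>P \<union> Q\<close> carries the color collision of the bad piece, each of \<open>uw\<close> and \<open>wv\<close> either forms
  a path on its own or takes part in that collision; both alternatives contradict
  \<open>snd e1 \<noteq> snd e2\<close>.\<close>

lemma bad_piece_on_no_shortcut_across_collision:
  assumes free: "rainbow_even_cycle_free G" and "B \<subseteq> G" and bp: "bad_piece_on P Q R s t B"
    and "\<not> rainbow (P \<union> Q)"
    and e1: "e1 \<in> P" "fst e1 = {u, w}" and e2: "e2 \<in> Q" "fst e2 = {w, v}"
    and f: "f \<in> G" "fst f = {u, v}" "snd f \<notin> colors B" and c12: "snd e1 \<noteq> snd e2"
  shows False
proof -
  note B = bad_piece_onD[OF bp]
  have col2: "Q = {e2} \<or> (\<exists>g\<in>P. snd g = snd e2)"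
    using bad_piece_on_shortcut_partner[OF free \<open>B \<subseteq> G\<close> bp \<open>\<not> rainbow (P \<union> Q)\<close> e1 e2 f] .
  have sw: "fst e2 = {v, w}" "fst e1 = {w, u}" "fst f = {v, u}" "\<not> rainbow (Q \<union> P)"
    using e1(2) e2(2) f(2) \<open>\<not> rainbow (P \<union> Q)\<close> by (simp_all add: insert_commute Un_commute)
  have col1: "P = {e1} \<or> (\<exists>h\<in>Q. snd h = snd e1)"
    by (rule bad_piece_on_shortcut_partner[OF free \<open>B \<subseteq> G\<close> bad_piece_on_swap12[OF bp] sw(4)
          e2(1) sw(1) e1(1) sw(2) f(1) sw(3) f(3)])
  show False
  proof (cases "P = {e1}")
    case True
    with col2 c12 have "Q = {e2}"
      by force
    moreover have "e1 \<noteq> e2"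
      using c12 by blast
    ultimately have "rainbow (P \<union> Q)"
      using True c12 by (simp add: rainbow_def colors_def)
    with \<open>\<not> rainbow (P \<union> Q)\<close> show False ..
  next
    case False
    with col1 obtain h where h: "h \<in> Q" "snd h = snd e1"
      by blast
    with c12 have "Q \<noteq> {e2}"
      by auto
    with col2 obtain g where g: "g \<in> P" "snd g = snd e2"
      by blast
    have disj: "P \<inter> Q = {}"
      using is_theta_disjoint[OF B(1)] by blast
    have "{h, e1} = {g, e2}"
    proof (rule almost_rainbow_collision_unique[OF B(5,6)])
      show "g \<in> B" "e2 \<in> B" "h \<in> B" "e1 \<in> B"
        using g(1) h(1) e1(1) e2(1) B(2,3) by blast+
      show "g \<noteq> e2" "h \<noteq> e1"
        using g(1) h(1) e1(1) e2(1) disj by blast+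
    qed (use g h in simp_all)
    moreover have "h \<noteq> g"
      using g(1) h(1) disj by blast
    ultimately have "e1 = g"
      by (auto simp: doubleton_eq_iff)
    with g(2) c12 show False
      by simp
  qed
qed

lemma bad_piece_on_no_shortcut_across:
  assumes free: "rainbow_even_cycle_free G" and "B \<subseteq> G" and bp: "bad_piece_on P Q R s t B"
    and e1: "e1 \<in> P" "fst e1 = {u, w}" and e2: "e2 \<in> Q" "fst e2 = {w, v}"
    and f: "f \<in> G" "fst f = {u, v}" "snd f \<notin> colors B" "{u, v} \<notin> uedges B"
    and "u \<noteq> v" and c12: "snd e1 \<noteq> snd e2"
  shows False
proof (cases "rainbow (P \<union> Q)")
  case True
  note B = bad_piece_onD[OF bp]
  have "P \<union> Q \<subseteq> G" "e1 \<in> P \<union> Q" "e2 \<in> P \<union> Q"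
    using B(2,3) \<open>B \<subseteq> G\<close> e1(1) e2(1) by blast+
  moreover have "snd f \<notin> colors (P \<union> Q)" "{u, v} \<notin> uedges (P \<union> Q)"
    using f(3,4) colors_mono[of "P \<union> Q" B] uedges_mono[of "P \<union> Q" B] B(2,3) by blast+
  ultimately show False
    using rainbow_cycle_no_shortcut[OF free _ bad_piece_on_cycle[OF bp] True _ e1(2) _ e2(2) f(1,2)
        _ _ \<open>u \<noteq> v\<close>]
    by blast
next
  case False
  then show False
    by (rule bad_piece_on_no_shortcut_across_collision[OF free \<open>B \<subseteq> G\<close> bp _ e1 e2 f(1-3) c12])
qed

lemma bad_piece_no_shortcut:
  assumes free: "rainbow_even_cycle_free G" and "X \<subseteq> G" and "bad_piece X"
    and e1: "e1 \<in> X" "fst e1 = {u, w}" and e2: "e2 \<in> X" "fst e2 = {w, v}"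
    and f: "f \<in> G" "fst f = {u, v}" "snd f \<notin> colors X" "{u, v} \<notin> uedges X"
    and "u \<noteq> v" and c12: "snd e1 \<noteq> snd e2"
  shows False
proof -
  obtain P Q R s t where bp: "bad_piece_on P Q R s t X"
    using \<open>bad_piece X\<close> by (rule bad_pieceE)
  then have "e1 \<in> P \<or> e1 \<in> Q \<or> e1 \<in> R"
    using e1(1) unfolding bad_piece_on_def by blast
  moreover have "bad_piece_on Q P R s t X" "bad_piece_on R P Q s t X"
    using bp bad_piece_on_swap12 bad_piece_on_swap23 by blast+
  ultimately obtain P' Q' R' where bp': "bad_piece_on P' Q' R' s t X" and "e1 \<in> P'"
    using bp by blast
  have "e2 \<in> P' \<or> e2 \<in> Q' \<or> e2 \<in> R'"
    using bp' e2(1) unfolding bad_piece_on_def by blast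
  then show False
  proof (elim disjE)
    assume "e2 \<in> P'"
    show False
      by (rule bad_piece_on_no_shortcut_within[OF free \<open>X \<subseteq> G\<close> bp' \<open>e1 \<in> P'\<close> e1(2)
            \<open>e2 \<in> P'\<close> e2(2) f \<open>u \<noteq> v\<close>])
  next
    assume "e2 \<in> Q'"
    show False
      by (rule bad_piece_on_no_shortcut_across[OF free \<open>X \<subseteq> G\<close> bp' \<open>e1 \<in> P'\<close> e1(2)
            \<open>e2 \<in> Q'\<close> e2(2) f \<open>u \<noteq> v\<close> c12])
  next
    assume "e2 \<in> R'"
    show False
      by (rule bad_piece_on_no_shortcut_across[OF free \<open>X \<subseteq> G\<close> bad_piece_on_swap23[OF bp']
            \<open>e1 \<in> P'\<close> e1(2) \<open>e2 \<in> R'\<close> e2(2) f \<open>u \<noteq> v\<close> c12])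
  qed
qed

lemma odd_cycle_or_bad_piece_no_shortcut:
  assumes free: "rainbow_even_cycle_free G" and "X \<subseteq> G"
    and X: "long_rainbow_odd_cycle X \<or> bad_piece X"
    and e1: "e1 \<in> X" "fst e1 = {u, w}" and e2: "e2 \<in> X" "fst e2 = {w, v}"
    and f: "f \<in> G" "fst f = {u, v}" "snd f \<notin> colors X" "{u, v} \<notin> uedges X"
    and "u \<noteq> v" and "snd e1 \<noteq> snd e2"
  shows False
  using X
proof
  assume "long_rainbow_odd_cycle X"
  then have "is_cycle X" "rainbow X"
    unfolding long_rainbow_odd_cycle_def by blast+
  then show False
    using rainbow_cycle_no_shortcut[OF free \<open>X \<subseteq> G\<close> _ _ e1 e2 f \<open>u \<noteq> v\<close>] by blast
next
  assume "bad_piece X"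
  then show False
    using bad_piece_no_shortcut assms by blast
qed

lemma odd_cycle_or_bad_piece_no_detour:
  assumes free: "rainbow_even_cycle_free G" and "X \<subseteq> G"
    and X: "long_rainbow_odd_cycle X \<or> bad_piece X"
    and ea: "ea \<in> X" "fst ea = {x, y}" and z: "z \<notin> verts X"
    and eb: "eb \<in> G" "fst eb = {y, z}" and ec: "ec \<in> G" "fst ec = {z, x}"
    and col: "snd eb \<noteq> snd ec" "snd eb \<notin> colors X" "snd ec \<notin> colors X"
  shows False
proof -
  obtain Y where Y: "Y \<subseteq> X" "is_cycle Y" "rainbow Y" "ea \<in> Y"
  proof (cases "long_rainbow_odd_cycle X")
    case True
    with ea(1) show ?thesis
      using that[of X] unfolding long_rainbow_odd_cycle_def by blast
  next
    case False
    with X ea(1) show ?thesis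
      using bad_piece_edge_in_rainbow_cycle that by blast
  qed
  moreover have "Y \<subseteq> G" "z \<notin> verts Y" "snd eb \<notin> colors Y" "snd ec \<notin> colors Y"
    using Y(1) \<open>X \<subseteq> G\<close> z col(2,3) verts_mono[OF Y(1)] colors_mono[OF Y(1)] by blast+
  ultimately show False
    using rainbow_cycle_no_detour[OF free _ _ _ _ ea(2) _ eb ec col(1)] by blast
qed

section \<open>Paths and depths in trees\<close>

definition graph_path :: "cgraph \<Rightarrow> nat list \<Rightarrow> bool" where
  "graph_path G xs \<longleftrightarrow> distinct xs \<and> xs \<noteq> [] \<and> pedges xs \<subseteq> uedges G"

lemma graph_path_prefix: "graph_path G (xs @ ys) \<Longrightarrow> xs \<noteq> [] \<Longrightarrow> graph_path G xs"
  unfolding graph_path_def using pedges_append_subset_left[of xs ys] by auto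

lemma graph_path_suffix: "graph_path G (xs @ ys) \<Longrightarrow> ys \<noteq> [] \<Longrightarrow> graph_path G ys"
  unfolding graph_path_def using pedges_append_subset_right[of ys xs] by auto

lemma graph_path_snoc:
  assumes "graph_path G xs" "y \<notin> set xs" "{last xs, y} \<in> uedges G"
  shows "graph_path G (xs @ [y])"
  using assms pedges_snoc[of xs y] unfolding graph_path_def by auto

lemma cycle_subgraph_of_cedges:
  assumes "is_cgraph G" "distinct ys" "length ys \<ge> 3" "cedges ys \<subseteq> uedges G"
  shows "\<exists>C\<subseteq>G. is_cycle C"
proof -
  define C where "C = {x \<in> G. fst x \<in> cedges ys}"
  have "uedges C = cedges ys"
    using assms(4) unfolding C_def uedges_def by auto
  moreover have "C \<subseteq> G"
    unfolding C_def by blast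
  ultimately show ?thesis
    using is_cgraph_subset[OF assms(1)] assms(2,3) unfolding is_cycle_def by blast
qed

text \<open>Two paths that leave a common vertex along different edges and meet again close a cycle:
  follow the first one up to its first vertex on the second, then return along the second.\<close>

lemma graph_paths_fork_cycle:
  assumes cg: "is_cgraph G" and px: "graph_path G (r # xs)" and py: "graph_path G (r # ys)"
    and "xs \<noteq> []" "ys \<noteq> []" "hd xs \<noteq> hd ys" "last xs = last ys"
  shows "\<exists>C\<subseteq>G. is_cycle C"
proof -
  have "\<exists>x\<in>set xs. x \<in> set ys"
    using assms(4,5,7) by (metis last_in_set)
  then obtain a z b where xs: "xs = a @ z # b" "z \<in> set ys" "\<forall>x\<in>set a. x \<notin> set ys"
    using split_list_first_prop[of xs "\<lambda>x. x \<in> set ys"] by blast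
  obtain c d where ys: "ys = c @ z # d"
    using xs(2) split_list by metis
  define cl where "cl = r # a @ z # rev c"
  have "distinct cl"
    using px py xs ys unfolding graph_path_def cl_def by auto
  moreover have "length cl \<ge> 3"
  proof (rule ccontr)
    assume "\<not> 3 \<le> length cl"
    moreover have "length cl = length a + length c + 2"
      by (simp add: cl_def)
    ultimately have "length a + length c = 0"
      by linarith
    then have "a = []" "c = []"
      by simp_all
    then show False
      using xs(1) ys assms(6) by simp
  qed
  moreover have "cedges cl \<subseteq> uedges G"
  proof -
    have "pedges (r # a @ [z]) \<subseteq> uedges G"
      using px xs(1) pedges_append_subset_left[of "r # a @ [z]" b] unfolding graph_path_def by auto
    moreover have "pedges (r # c @ [z]) \<subseteq> uedges G"
      using py ys pedges_append_subset_left[of "r # c @ [z]" d] unfolding graph_path_def by auto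
    moreover have "cedges cl = pedges (r # a @ [z]) \<union> pedges (rev (r # c @ [z]))"
      unfolding cedges_def cl_def
      using pedges_append[of "r # a" z "rev c @ [r]"] by simp
    ultimately show ?thesis
      by (simp only: pedges_rev) blast
  qed
  ultimately show ?thesis
    using cycle_subgraph_of_cedges[OF cg] by blast
qed

lemma distinct_last_eq_hd: "distinct (r # zs) \<Longrightarrow> last (r # zs) = r \<Longrightarrow> zs = []"
  by (cases zs rule: rev_cases) auto

lemma graph_path_unique:
  assumes cg: "is_cgraph G" and acyclic: "\<not> (\<exists>C\<subseteq>G. is_cycle C)"
  shows "graph_path G xs \<Longrightarrow> graph_path G ys \<Longrightarrow> hd xs = hd ys \<Longrightarrow> last xs = last ys \<Longrightarrow> xs = ys"
proof (induction xs arbitrary: ys)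
  case Nil
  then show ?case
    by (simp add: graph_path_def)
next
  case (Cons r xs)
  obtain ys' where ys: "ys = r # ys'"
    using Cons.prems(2,3) unfolding graph_path_def by (cases ys) auto
  have pys: "graph_path G (r # ys')"
    using Cons.prems(2) ys by simp
  have last_eq: "last (r # xs) = last (r # ys')"
    using Cons.prems(4) ys by simp
  show ?case
  proof (cases "xs = [] \<or> ys' = []")
    case True
    have "distinct (r # xs)" "distinct (r # ys')"
      using Cons.prems(1) pys unfolding graph_path_def by blast+
    then have "xs = []" "ys' = []"
      using True last_eq distinct_last_eq_hd[of r xs] distinct_last_eq_hd[of r ys']
      by (metis last.simps)+
    then show ?thesis
      using ys by simp
  next
    case False
    have "last xs = last ys'"
      using last_eq False by simp
    have "hd xs = hd ys'"
    proof (rule ccontr)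
      assume "hd xs \<noteq> hd ys'"
      then have "\<exists>C\<subseteq>G. is_cycle C"
        using graph_paths_fork_cycle[OF cg Cons.prems(1) pys] False \<open>last xs = last ys'\<close> by blast
      with acyclic show False ..
    qed
    moreover have "graph_path G xs" "graph_path G ys'"
      using graph_path_suffix[of G "[r]"] Cons.prems(1) pys False by auto
    ultimately have "xs = ys'"
      using Cons.IH \<open>last xs = last ys'\<close> by blast
    then show ?thesis
      using ys by simp
  qed
qed

lemma graph_path_of_rtrancl:
  "(x, y) \<in> (adj G)\<^sup>* \<Longrightarrow> \<exists>xs. graph_path G xs \<and> hd xs = x \<and> last xs = y"
proof (induction rule: converse_rtrancl_induct)
  case base
  show ?case
    by (intro exI[of _ "[y]"]) (simp add: graph_path_def)
next
  case (step x z)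
  then obtain zs where zs: "graph_path G zs" "hd zs = z" "last zs = y"
    by blast
  show ?case
  proof (cases "x \<in> set zs")
    case True
    then obtain a b where "zs = a @ x # b"
      by (meson split_list)
    then show ?thesis
      using zs graph_path_suffix[of G a "x # b"] by (intro exI[of _ "x # b"]) auto
  next
    case False
    have "zs \<noteq> []"
      using zs(1) unfolding graph_path_def by blast
    then have "pedges (x # zs) = insert {x, z} (pedges zs)"
      using zs(2) by (cases zs) auto
    moreover have "{x, z} \<in> uedges G"
      using step(1) unfolding adj_def by simp
    ultimately have "graph_path G (x # zs)"
      using zs(1) False unfolding graph_path_def by auto
    then show ?thesis
      using zs(3) \<open>zs \<noteq> []\<close> by (intro exI[of _ "x # zs"]) simp
  qed
qed

lemma tree_path_unique:
  "is_tree T \<Longrightarrow> graph_path T xs \<Longrightarrow> graph_path T ys \<Longrightarrow> hd xs = hd ys \<Longrightarrow> last xs = last ys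
    \<Longrightarrow> xs = ys"
  using graph_path_unique unfolding is_tree_def by blast

lemma tree_root_in_verts:
  assumes "is_tree T"
  shows "root T \<in> verts T"
proof -
  have cg: "is_cgraph T" and "T \<noteq> {}"
    using assms unfolding is_tree_def by blast+
  then obtain e where "e \<in> T" "card (fst e) = 2"
    unfolding is_cgraph_def by blast
  then have "verts T \<noteq> {}"
    using in_verts[of e T] by fastforce
  then show ?thesis
    unfolding root_def using finite_verts[OF cg] by simp
qed

lemma tree_root_pathE:
  assumes "is_tree T" "x \<in> verts T"
  obtains xs where "graph_path T xs" "hd xs = root T" "last xs = x"
proof -
  have "(root T, x) \<in> (adj T)\<^sup>*"
    using assms tree_root_in_verts[OF assms(1)] unfolding is_tree_def by blast
  then show ?thesis
    using graph_path_of_rtrancl that by blast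
qed

lemma depth_eq:
  assumes "is_tree T" "graph_path T xs" "hd xs = root T" "last xs = x"
  shows "depth T x = length xs - 1"
  unfolding depth_def
proof (rule the_equality)
  show "\<exists>ys. distinct ys \<and> ys \<noteq> [] \<and> hd ys = root T \<and> last ys = x \<and> pedges ys \<subseteq> uedges T \<and>
      length xs - 1 = length ys - 1"
    using assms(2-4) unfolding graph_path_def by blast
next
  fix k
  assume "\<exists>ys. distinct ys \<and> ys \<noteq> [] \<and> hd ys = root T \<and> last ys = x \<and> pedges ys \<subseteq> uedges T \<and>
      k = length ys - 1"
  then obtain ys where "graph_path T ys" "hd ys = root T" "last ys = x" "k = length ys - 1"
    unfolding graph_path_def by blast
  then show "k = length xs - 1"
    using tree_path_unique[OF assms(1) _ assms(2)] assms(3,4) by metis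
qed

lemma tree_root_path_snoc:
  assumes tr: "is_tree T" and p: "graph_path T p" "hd p = root T" "last p = a"
    and ab: "{a, b} \<in> uedges T" "depth T a + 1 = depth T b"
  shows "graph_path T (p @ [b])"
proof -
  have "b \<notin> set p"
  proof
    assume "b \<in> set p"
    then obtain q r where qr: "p = q @ b # r"
      by (meson split_list)
    then have "graph_path T (q @ [b])" "hd (q @ [b]) = root T"
      using graph_path_prefix[of T "q @ [b]" r] p(1,2) by (simp_all, cases q, simp_all)
    then have "depth T b = length q"
      using depth_eq[OF tr] by simp
    moreover have "depth T a = length p - 1"
      using depth_eq[OF tr p] .
    ultimately show False
      using ab(2) qr by simp
  qed
  then show ?thesis
    using graph_path_snoc[OF p(1)] p(3) ab(1) by simp
qed

lemma tree_adjacent_depth: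
  assumes tr: "is_tree T" and ab: "{a, b} \<in> uedges T" "a \<noteq> b"
  shows "depth T a = depth T b + 1 \<or> depth T b = depth T a + 1"
proof -
  have "a \<in> verts T"
    using ab(1) verts_conv_uedges by auto
  then obtain p where p: "graph_path T p" "hd p = root T" "last p = a"
    using tree_root_pathE[OF tr] by blast
  have "p \<noteq> []"
    using p(1) unfolding graph_path_def by blast
  have da: "depth T a = length p - 1"
    using depth_eq[OF tr p] .
  show ?thesis
  proof (cases "b \<in> set p")
    case True
    then obtain q r where qr: "p = q @ b # r"
      by (meson split_list)
    have "graph_path T (q @ [b])" "hd (q @ [b]) = root T"
      using graph_path_prefix[of T "q @ [b]" r] p(1,2) qr by (simp_all, cases q, simp_all)
    moreover have "a \<notin> set (q @ [b])"
    proof -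
      have "r \<noteq> []"
        using p(3) qr ab(2) by auto
      then have "a \<in> set r"
        using p(3) qr last_in_set by fastforce
      then show ?thesis
        using p(1) qr unfolding graph_path_def by auto
    qed
    moreover have "{b, a} \<in> uedges T"
      using ab(1) by (simp add: insert_commute)
    ultimately have "graph_path T (q @ [b, a])" "hd (q @ [b, a]) = root T"
      using graph_path_snoc[of T "q @ [b]" a] by (simp_all, cases q, simp_all)
    then have "q @ [b, a] = p"
      using tree_path_unique[OF tr _ p(1)] p(2,3) by simp
    moreover have "depth T b = length q"
      using depth_eq[OF tr \<open>graph_path T (q @ [b])\<close> \<open>hd (q @ [b]) = root T\<close>] by simp
    ultimately show ?thesis
      using da by auto
  next
    case False
    then have "graph_path T (p @ [b])"
      using graph_path_snoc[OF p(1)] p(3) ab(1) by simp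
    then have "depth T b = length p"
      using depth_eq[OF tr _ _] p(2) \<open>p \<noteq> []\<close> by simp
    then show ?thesis
      using da \<open>p \<noteq> []\<close> by simp
  qed
qed

section \<open>Exchanging an edge of a tree\<close>

lemma tree_parent_unique:
  assumes tr: "is_tree T" and "{a, c} \<in> uedges T" "{b, c} \<in> uedges T"
    and "depth T a + 1 = depth T c" "depth T b + 1 = depth T c"
  shows "a = b"
proof -
  have "a \<in> verts T" "b \<in> verts T"
    using assms(2,3) verts_conv_uedges by auto
  then obtain pa pb where pa: "graph_path T pa" "hd pa = root T" "last pa = a"
    and pb: "graph_path T pb" "hd pb = root T" "last pb = b"
    using tree_root_pathE[OF tr] by metis
  have "graph_path T (pa @ [c])" "graph_path T (pb @ [c])"
    using tree_root_path_snoc[OF tr pa assms(2,4)] tree_root_path_snoc[OF tr pb assms(3,5)]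
    by simp_all
  moreover have "pa \<noteq> []" "pb \<noteq> []"
    using pa(1) pb(1) unfolding graph_path_def by blast+
  then have "hd (pa @ [c]) = hd (pb @ [c])" "last (pa @ [c]) = last (pb @ [c])"
    using pa(2) pb(2) by simp_all
  ultimately have "pa @ [c] = pb @ [c]"
    using tree_path_unique[OF tr] by blast
  then show ?thesis
    using pa(3) pb(3) by simp
qed

lemma total_depth_list_update_less:
  assumes k: "k < length Ts" and v: "verts T' = verts (Ts ! k)" "finite (verts T')"
    and le: "\<And>x. x \<in> verts T' \<Longrightarrow> depth T' x \<le> depth (Ts ! k) x"
    and less: "y \<in> verts T'" "depth T' y < depth (Ts ! k) y"
  shows "total_depth (Ts[k := T']) < total_depth Ts"
proof -
  have inner: "(\<Sum>x\<in>verts T'. depth T' x) < (\<Sum>x\<in>verts (Ts ! k). depth (Ts ! k) x)"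
    unfolding v(1)[symmetric] using sum_strict_mono_ex1[OF v(2)] le less by blast
  show ?thesis
    unfolding total_depth_def length_list_update
    by (rule sum_strict_mono_ex1) (use k inner in \<open>auto simp: nth_list_update\<close>)
qed

locale tree_exchange =
  fixes T :: cgraph and e f :: "nat set \<times> nat" and u v w :: nat
  assumes tree: "is_tree T"
    and uw: "{u, w} \<in> uedges T" and e: "e \<in> T" "fst e = {w, v}"
    and f: "fst f = {u, v}" "{u, v} \<notin> uedges T"
    and distinct: "u \<noteq> v" "u \<noteq> w" "v \<noteq> w"
begin

definition T' :: cgraph where
  "T' = insert f (T - {e})"

lemma cgraph: "is_cgraph T"
  using tree unfolding is_tree_def by blast

lemma uedges_T': "uedges T' = insert {u, v} (uedges T - {{w, v}})"
  unfolding T'_def using uedges_Diff[OF cgraph, of "{e}"] e f(1) by simp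

lemma verts_T': "verts T' = verts T"
proof -
  have "{w, v} \<in> uedges T"
    using e fst_in_uedges by metis
  then show ?thesis
    unfolding verts_conv_uedges uedges_T' using uw distinct by blast
qed

lemma root_T': "root T' = root T"
  unfolding root_def verts_T' ..

lemma is_cgraph_T': "is_cgraph T'"
proof -
  have "is_cgraph (T - {e})"
    using is_cgraph_subset[OF cgraph] by blast
  moreover have "fst f \<notin> uedges (T - {e})"
    using f uedges_mono[OF Diff_subset, of T "{e}"] by auto
  ultimately show ?thesis
    unfolding T'_def using is_cgraph_insert f(1) distinct(1) by simp
qed

lemma rtrancl_adj_T': "(adj T)\<^sup>* \<subseteq> (adj T')\<^sup>*"
proof -
  have "(w, u) \<in> adj T'" "(u, v) \<in> adj T'" "(v, u) \<in> adj T'" "(u, w) \<in> adj T'"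
    using uw distinct unfolding adj_def uedges_T' by (auto simp: insert_commute doubleton_eq_iff)
  then have "(w, v) \<in> (adj T')\<^sup>*" "(v, w) \<in> (adj T')\<^sup>*"
    by (meson converse_rtrancl_into_rtrancl r_into_rtrancl)+
  moreover have "(a, b) \<in> adj T'" if "(a, b) \<in> adj T" "{a, b} \<noteq> {w, v}" for a b
    using that unfolding adj_def uedges_T' by simp
  ultimately have "adj T \<subseteq> (adj T')\<^sup>*"
    unfolding adj_def by (auto simp: doubleton_eq_iff)
  then show ?thesis
    by (metis rtrancl_subset_rtrancl)
qed

text \<open>A cycle through the new edge \<open>uv\<close> would leave a second path from \<open>u\<close> to \<open>v\<close> in the tree
  besides \<open>u w v\<close>.\<close>

lemma acyclic_T': "\<not> (\<exists>C\<subseteq>T'. is_cycle C)"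
proof
  assume "\<exists>C\<subseteq>T'. is_cycle C"
  then obtain C where C: "C \<subseteq> T'" "is_cycle C"
    by blast
  show False
  proof (cases "f \<in> C")
    case False
    then have "C \<subseteq> T"
      using C(1) unfolding T'_def by blast
    with C(2) tree show False
      unfolding is_tree_def by blast
  next
    case True
    obtain xs where xs: "distinct xs" "length xs \<ge> 3" "hd xs = u" "last xs = v"
      "pedges xs = uedges C - {{u, v}}"
      using cycle_open_at_edge[OF C(2) True f(1)] by blast
    moreover have "uedges C \<subseteq> insert {u, v} (uedges T - {{w, v}})"
      using uedges_mono[OF C(1)] unfolding uedges_T' .
    ultimately have path: "pedges xs \<subseteq> uedges T - {{w, v}}"
      by blast
    then have "graph_path T xs"
      using xs(1,2) unfolding graph_path_def by auto
    moreover have "{w, v} \<in> uedges T"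
      using fst_in_uedges[OF e(1)] e(2) by simp
    then have "graph_path T [u, w, v]"
      using uw distinct unfolding graph_path_def by simp
    moreover have "hd [u, w, v] = hd xs" "last [u, w, v] = last xs"
      using xs(3,4) by simp_all
    ultimately have "xs = [u, w, v]"
      using tree_path_unique[OF tree] by blast
    with path show False
      by simp
  qed
qed

lemma is_tree_T': "is_tree T'"
proof -
  have "T' \<noteq> {}"
    unfolding T'_def by blast
  moreover have "\<forall>x\<in>verts T'. \<forall>y\<in>verts T'. (x, y) \<in> (adj T')\<^sup>*"
    using tree rtrancl_adj_T' unfolding is_tree_def verts_T' by blast
  ultimately show ?thesis
    unfolding is_tree_def using is_cgraph_T' acyclic_T' by blast
qed

lemma rainbow_T':
  assumes "rainbow T" "snd f \<notin> colors T"
  shows "rainbow T'"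
proof -
  have "finite (T - {e})" "rainbow (T - {e})" "colors (T - {e}) \<subseteq> colors T"
    using is_cgraph_finite[OF cgraph] rainbow_subset[OF _ assms(1)] colors_mono by auto
  then show ?thesis
    unfolding T'_def using rainbow_insert assms(2) by blast
qed

context
  assumes down: "depth T u + 1 = depth T w"
begin

lemma depth_v: "depth T v = depth T w + 1"
proof -
  have wv: "{w, v} \<in> uedges T" "{v, w} \<in> uedges T"
    using fst_in_uedges[OF e(1)] e(2) by (simp_all add: insert_commute)
  have "depth T w + 1 \<noteq> depth T w"
    by simp
  moreover have "depth T v + 1 \<noteq> depth T w"
    using tree_parent_unique[OF tree uw wv(2) down] distinct(1) by blast
  ultimately show ?thesis
    using tree_adjacent_depth[OF tree wv(1) distinct(3)[symmetric]] by auto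
qed

text \<open>A root path of \<open>T\<close> through the removed edge runs through \<open>u\<close>, \<open>w\<close>, \<open>v\<close>; in \<open>T'\<close> it
  can skip \<open>w\<close>.\<close>

lemma root_path_through_removed_edge:
  assumes px: "graph_path T px" "hd px = root T" and "{w, v} \<in> pedges px"
    and pu: "graph_path T pu" "hd pu = root T" "last pu = u"
  obtains q where "px = pu @ w # v # q"
proof -
  have pw: "graph_path T (pu @ [w])"
    using tree_root_path_snoc[OF tree pu uw down] .
  have hd_pw: "hd (pu @ [w]) = root T"
    using pu(1,2) unfolding graph_path_def by simp
  obtain p q where "px = p @ w # v # q \<or> px = p @ v # w # q"
    using assms(3) by (rule in_pedges_split)
  then show ?thesis
  proof
    assume split: "px = p @ w # v # q"
    then have "graph_path T (p @ [w])" "hd (p @ [w]) = root T"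
      using graph_path_prefix[of T "p @ [w]" "v # q"] px by (simp_all, cases p, simp_all)
    then have "p @ [w] = pu @ [w]"
      using tree_path_unique[OF tree _ pw] hd_pw by simp
    with split that show ?thesis
      by simp
  next
    assume split: "px = p @ v # w # q"
    then have "graph_path T (p @ [v, w])" "hd (p @ [v, w]) = root T"
      using graph_path_prefix[of T "p @ [v, w]" q] px by (simp_all, cases p, simp_all)
    then have "p @ [v, w] = pu @ [w]"
      using tree_path_unique[OF tree _ pw] hd_pw by simp
    then have "last pu = v"
      by (metis append.assoc append1_eq_conv append_Cons append_Nil last_snoc)
    with pu(3) distinct(1) show ?thesis
      by simp
  qed
qed

lemma depth_T'_le_depth:
  assumes px: "graph_path T px" "hd px = root T" "last px = x"
  shows "depth T' x \<le> depth T x"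
proof (cases "{w, v} \<in> pedges px")
  case False
  then have "graph_path T' px"
    using px(1) unfolding graph_path_def uedges_T' by auto
  then show ?thesis
    using depth_eq[OF is_tree_T'] depth_eq[OF tree px] px(2,3) root_T' by simp
next
  case True
  obtain pu where pu: "graph_path T pu" "hd pu = root T" "last pu = u"
    using tree_root_pathE[OF tree] uw verts_conv_uedges by blast
  then obtain q where split: "px = pu @ w # v # q"
    using root_path_through_removed_edge[OF px(1,2) True] by blast
  have "pu \<noteq> []" "w \<notin> set pu" "w \<notin> set (v # q)"
    using px(1) pu(1) split unfolding graph_path_def by auto
  have "pedges (pu @ v # q) = insert {u, v} (pedges pu) \<union> pedges (v # q)"
    using pedges_append[of pu v q] pedges_snoc[OF \<open>pu \<noteq> []\<close>, of v] pu(3) by simp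
  moreover have "pedges pu \<subseteq> uedges T" "pedges (v # q) \<subseteq> uedges T"
    using px(1) pu(1) split pedges_append_subset_right[of "v # q" "pu @ [w]"]
    unfolding graph_path_def by auto
  moreover have "{w, v} \<notin> pedges pu" "{w, v} \<notin> pedges (v # q)"
    using doubleton_notin_pedges \<open>w \<notin> set pu\<close> \<open>w \<notin> set (v # q)\<close> by blast+
  ultimately have "graph_path T' (pu @ v # q)"
    using px(1) split unfolding graph_path_def uedges_T' by auto
  moreover have "hd (pu @ v # q) = root T'" "last (pu @ v # q) = x"
    using pu(2) \<open>pu \<noteq> []\<close> px(3) split root_T' by simp_all
  ultimately have "depth T' x = length (pu @ v # q) - 1"
    using depth_eq[OF is_tree_T'] by blast
  then show ?thesis
    using depth_eq[OF tree px] split by simp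
qed

lemma depth_T'_v_less: "depth T' v < depth T v"
proof -
  obtain pu where pu: "graph_path T pu" "hd pu = root T" "last pu = u"
    using tree_root_pathE[OF tree] uw verts_conv_uedges by blast
  have "pu \<noteq> []"
    using pu(1) unfolding graph_path_def by blast
  have "{w, v} \<in> uedges T"
    using fst_in_uedges[OF e(1)] e(2) by simp
  moreover have "graph_path T (pu @ [w])" "hd (pu @ [w]) = root T" "last (pu @ [w]) = w"
    using tree_root_path_snoc[OF tree pu uw down] pu(2) \<open>pu \<noteq> []\<close> by simp_all
  ultimately have "graph_path T ((pu @ [w]) @ [v])"
    using tree_root_path_snoc[OF tree _ _ _ _ depth_v[symmetric]] by blast
  then have "graph_path T (pu @ [w, v])" "v \<notin> set pu" "w \<notin> set pu"
    unfolding graph_path_def by auto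
  then have "depth T v = length pu + 1"
    using depth_eq[OF tree _ _] pu(2) \<open>pu \<noteq> []\<close> by simp
  have "{w, v} \<notin> pedges pu"
    using doubleton_notin_pedges \<open>w \<notin> set pu\<close> by blast
  then have "graph_path T' (pu @ [v])"
    using pu \<open>v \<notin> set pu\<close> \<open>pu \<noteq> []\<close> pedges_snoc[of pu v]
    unfolding graph_path_def uedges_T' by auto
  then have "depth T' v = length pu"
    using depth_eq[OF is_tree_T' _ _] pu(2) root_T' \<open>pu \<noteq> []\<close> by simp
  with \<open>depth T v = length pu + 1\<close> show ?thesis
    by simp
qed

lemma total_depth_T'_less:
  assumes "k < length Ts" "Ts ! k = T"
  shows "total_depth (Ts[k := T']) < total_depth Ts"
proof (rule total_depth_list_update_less)
  show "k < length Ts" "verts T' = verts (Ts ! k)" "finite (verts T')"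
    using assms verts_T' finite_verts[OF is_cgraph_T'] by simp_all
  show "depth T' x \<le> depth (Ts ! k) x" if "x \<in> verts T'" for x
  proof -
    have "x \<in> verts T"
      using that verts_T' by simp
    then obtain px where "graph_path T px" "hd px = root T" "last px = x"
      by (rule tree_root_pathE[OF tree])
    then show ?thesis
      using depth_T'_le_depth assms(2) by simp
  qed
  have "v \<in> fst e"
    using e(2) by simp
  then show "v \<in> verts T'"
    using in_verts[OF e(1)] verts_T' by blast
  show "depth T' v < depth (Ts ! k) v"
    using depth_T'_v_less assms(2) by simp
qed

end

end

section \<open>Frankenstein graphs\<close>

lemma is_partition_nth_subset: "is_partition F ps \<Longrightarrow> i < length ps \<Longrightarrow> ps ! i \<subseteq> F"
  unfolding is_partition_def by auto

lemma Union_set_conv_nth: "x \<in> \<Union> (set xs) \<longleftrightarrow> (\<exists>i<length xs. x \<in> xs ! i)"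
  by (metis UnionE UnionI in_set_conv_nth nth_mem)

lemma Union_set_list_update_exchange:
  assumes j: "j < length ps" and e: "e \<in> ps ! j"
    and e_only: "\<And>i. i < length ps \<Longrightarrow> i \<noteq> j \<Longrightarrow> e \<notin> ps ! i"
  shows "\<Union> (set (ps[j := insert f (ps ! j - {e})])) = insert f (\<Union> (set ps) - {e})"
proof -
  have upd: "ps[j := insert f (ps ! j - {e})] ! i = (if i = j then insert f (ps ! j - {e}) else ps ! i)"
    if "i < length ps" for i
    using that j by simp
  have "x \<in> insert f (\<Union> (set ps) - {e})" if "i < length ps" "x \<in> ps[j := insert f (ps ! j - {e})] ! i"
    for i x
    using that upd e_only j by (cases "i = j") (auto simp: Union_set_conv_nth)
  moreover have "\<exists>i<length ps. x \<in> ps[j := insert f (ps ! j - {e})] ! i"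
    if x: "x \<in> insert f (\<Union> (set ps) - {e})" for x
  proof (cases "x = f")
    case True
    then show ?thesis
      using j upd by auto
  next
    case False
    then have "x \<in> \<Union> (set ps)" "x \<noteq> e"
      using x by auto
    then obtain i where "i < length ps" "x \<in> ps ! i" "x \<noteq> e"
      unfolding Union_set_conv_nth by blast
    then show ?thesis
      using upd by (intro exI[of _ i]) auto
  qed
  ultimately show ?thesis
    by (simp only: set_eq_iff Union_set_conv_nth length_list_update) blast
qed

lemma is_partition_list_update:
  assumes P: "is_partition F ps" and j: "j < length ps" and e: "e \<in> ps ! j"
    and T': "T' = insert f (ps ! j - {e})" "verts T' = verts (ps ! j)"
    and new: "snd f \<notin> colors F"
  shows "is_partition (insert f (F - {e})) (ps[j := T'])"
proof -
  have disj: "card (verts (ps ! a) \<inter> verts (ps ! b)) \<le> 1 \<and> colors (ps ! a) \<inter> colors (ps ! b) = {}"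
    if "a < length ps" "b < length ps" "a \<noteq> b" for a b
    using P that unfolding is_partition_def by blast
  have "e \<notin> ps ! i" if "i < length ps" "i \<noteq> j" for i
    using disj[OF that(1) j that(2)] snd_in_colors[OF e] snd_in_colors[of e "ps ! i"] by blast
  then have union: "\<Union> (set (ps[j := T'])) = insert f (F - {e})"
    using Union_set_list_update_exchange[OF j e] P T'(1) unfolding is_partition_def by simp
  have upd: "ps[j := T'] ! i = (if i = j then T' else ps ! i)" if "i < length ps" for i
    using that j by simp
  have verts_upd: "verts (ps[j := T'] ! i) = verts (ps ! i)" if "i < length ps" for i
    using T'(2) upd[OF that] by simp
  have colors_upd: "colors (ps[j := T'] ! i) \<subseteq> insert (snd f) (colors (ps ! i))" if "i < length ps" for i
    using T'(1) upd[OF that] by (auto simp: colors_def)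
  have f_new: "snd f \<notin> colors (ps ! i)" if "i < length ps" for i
    using new colors_mono[OF is_partition_nth_subset[OF P that]] by blast
  have "colors (ps[j := T'] ! a) \<inter> colors (ps[j := T'] ! b) = {}"
    if "a < length ps" "b < length ps" "a \<noteq> b" for a b
  proof (cases "a = j")
    case True
    then have "colors (ps[j := T'] ! b) = colors (ps ! b)"
      using that upd by simp
    then show ?thesis
      using colors_upd[OF that(1)] disj[OF that] f_new[OF that(2)] by blast
  next
    case False
    then have "colors (ps[j := T'] ! a) = colors (ps ! a)"
      using that upd by simp
    then show ?thesis
      using colors_upd[OF that(2)] disj[OF that] f_new[OF that(1)] by blast
  qed
  with union show ?thesis
    unfolding is_partition_def using disj verts_upd by simp
qed

lemma standing_setup_no_rainbow_even_cycle:
  "standing_setup n m D \<Longrightarrow> H \<subseteq> union_D m D \<Longrightarrow> \<not> rainbow_even_cycle H"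
  unfolding standing_setup_def rainbow_even_cycle_def is_cycle_def by blast

lemma frankenstein_tree_update:
  assumes fr: "frankenstein F Cs Bs Ts" and k: "k < length Ts" and e: "e \<in> Ts ! k"
    and T': "T' = insert f (Ts ! k - {e})" "verts T' = verts (Ts ! k)" "is_tree T'" "rainbow T'"
    and f: "snd f \<notin> colors F" "fst f \<notin> uedges F" "card (fst f) = 2"
    and no_even: "\<forall>H\<subseteq>insert f (F - {e}). \<not> rainbow_even_cycle H"
  shows "frankenstein (insert f (F - {e})) Cs Bs (Ts[k := T'])"
proof -
  have cgF: "is_cgraph F" and P: "is_partition F (Cs @ Bs @ Ts)"
    and trees: "\<forall>T\<in>set Ts. is_tree T \<and> rainbow T"
    and disj: "\<forall>i<length Ts. \<forall>j<length Ts. i \<noteq> j \<longrightarrow> verts (Ts ! i) \<inter> verts (Ts ! j) = {}"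
    using fr unfolding frankenstein_def by blast+
  have "is_cgraph (insert f (F - {e}))"
    using is_cgraph_insert[OF is_cgraph_subset[OF cgF Diff_subset] f(3)]
      f(2) uedges_mono[OF Diff_subset, of F "{e}"] by blast
  moreover have "is_partition (insert f (F - {e})) (Cs @ Bs @ Ts[k := T'])"
  proof -
    define j where "j = length Cs + length Bs + k"
    have "j < length (Cs @ Bs @ Ts)" "(Cs @ Bs @ Ts) ! j = Ts ! k"
      using k by (simp_all add: j_def nth_append)
    moreover have "Cs @ Bs @ Ts[k := T'] = (Cs @ Bs @ Ts)[j := T']"
      by (simp add: j_def list_update_append)
    moreover have "e \<in> (Cs @ Bs @ Ts) ! j" "T' = insert f ((Cs @ Bs @ Ts) ! j - {e})"
      "verts T' = verts ((Cs @ Bs @ Ts) ! j)"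
      using e T'(1,2) \<open>(Cs @ Bs @ Ts) ! j = Ts ! k\<close> by simp_all
    ultimately show ?thesis
      using is_partition_list_update[OF P _ _ _ _ f(1)] by metis
  qed
  moreover have "\<forall>T\<in>set (Ts[k := T']). is_tree T \<and> rainbow T"
    using trees T'(3,4) set_update_subset_insert[of Ts k T'] by blast
  moreover have "verts (Ts[k := T'] ! i) = verts (Ts ! i)" if "i < length Ts" for i
    using T'(2) that by (cases "i = k") auto
  then have "\<forall>i<length Ts. \<forall>j<length Ts. i \<noteq> j \<longrightarrow>
      verts (Ts[k := T'] ! i) \<inter> verts (Ts[k := T'] ! j) = {}"
    using disj by simp
  ultimately show ?thesis
    using fr no_even unfolding frankenstein_def by simp
qed

text \<open>Trading the tree edge \<open>wv\<close> for an outer edge \<open>uv\<close>, where \<open>u\<close>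
  is the parent of \<open>w\<close>, would lower the total depth of an extremal Frankenstein graph.\<close>

lemma extremal_frankenstein_no_tree_exchange:
  assumes st: "standing_setup n m D" and ex: "extremal_frankenstein m D F Cs Bs Ts"
    and k: "k < length Ts" and uw: "{u, w} \<in> uedges (Ts ! k)"
    and e: "e \<in> Ts ! k" "fst e = {w, v}"
    and f: "f \<in> union_D m D" "fst f = {u, v}" "snd f \<notin> colors F" "{u, v} \<notin> uedges F"
    and distinct: "u \<noteq> v" "u \<noteq> w" "v \<noteq> w"
    and down: "depth (Ts ! k) u + 1 = depth (Ts ! k) w"
  shows False
proof -
  have FU: "F \<subseteq> union_D m D" and fr: "frankenstein F Cs Bs Ts"
    using ex unfolding extremal_frankenstein_def by blast+
  have T: "Ts ! k \<in> set Ts" "Ts ! k \<subseteq> F"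
    using k fr is_partition_nth_subset[of F "Cs @ Bs @ Ts" "length Cs + length Bs + k"]
    unfolding frankenstein_def by (auto simp: nth_append)
  then have "is_tree (Ts ! k)" "rainbow (Ts ! k)"
    using fr unfolding frankenstein_def by blast+
  moreover have "{u, v} \<notin> uedges (Ts ! k)" "snd f \<notin> colors (Ts ! k)"
    using f(3,4) uedges_mono[OF T(2)] colors_mono[OF T(2)] by blast+
  ultimately interpret exchange: tree_exchange "Ts ! k" e f u v w
    using uw e f(2) distinct by unfold_locales
  define F' where "F' = insert f (F - {e})"
  have "F' \<subseteq> union_D m D"
    using FU f(1) unfolding F'_def by blast
  moreover have "frankenstein F' Cs Bs (Ts[k := exchange.T'])"
    unfolding F'_def
  proof (rule frankenstein_tree_update[OF fr k e(1) exchange.T'_def exchange.verts_T'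
        exchange.is_tree_T' exchange.rainbow_T'])
    show "rainbow (Ts ! k)" "snd f \<notin> colors (Ts ! k)" "snd f \<notin> colors F"
      using \<open>rainbow (Ts ! k)\<close> \<open>snd f \<notin> colors (Ts ! k)\<close> f(3) by blast+
    show "fst f \<notin> uedges F" "card (fst f) = 2"
      using f(2,4) distinct(1) by simp_all
    show "\<forall>H\<subseteq>insert f (F - {e}). \<not> rainbow_even_cycle H"
      using standing_setup_no_rainbow_even_cycle[OF st] FU f(1) by blast
  qed
  moreover have "card F' = card F"
  proof -
    have "finite F" "e \<in> F" "f \<notin> F"
      using fr T(2) e(1) f(3) snd_in_colors[of f F] unfolding frankenstein_def
      by (auto intro: is_cgraph_finite)
    then show ?thesis
      unfolding F'_def using card_Suc_Diff1[of F e] by simp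
  qed
  moreover have "total_depth (Ts[k := exchange.T']) < total_depth Ts"
    using exchange.total_depth_T'_less[OF down k refl] .
  ultimately show False
    using ex unfolding extremal_frankenstein_def better_def params_def by auto
qed

section \<open>Outer triangles\<close>

lemma outer_edge_new:
  assumes "standing_setup n m D" "outer_edge m D F f"
  shows "f \<in> union_D m D" "snd f \<notin> colors F" "fst f \<notin> uedges F"
proof -
  obtain l where l: "l \<in> {1..m}" "l \<notin> colors F" "f \<in> D l"
    using assms(2) unfolding outer_edge_def by blast
  then show "f \<in> union_D m D"
    unfolding union_D_def by blast
  show new: "snd f \<notin> colors F"
    using assms(1) l unfolding standing_setup_def by metis
  show "fst f \<notin> uedges F"
  proof
    assume "fst f \<in> uedges F"
    then obtain g where "g \<in> F" "fst g = fst f"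
      by (rule uedgesE)
    moreover have "snd g \<noteq> snd f"
      using snd_in_colors[OF \<open>g \<in> F\<close>] new by metis
    ultimately show False
      using assms(2) unfolding outer_edge_def coincident_def by blast
  qed
qed

lemma cedges_triangle:
  "x \<in> {a, b, c} \<Longrightarrow> y \<in> {a, b, c} \<Longrightarrow> x \<noteq> y \<Longrightarrow> {x, y} \<in> cedges [a, b, c]"
  by (auto simp: cedges_def insert_commute)

lemma triangle_cycle:
  assumes "is_cycle C" "card C = 3" "verts C = {u, v, w}"
  shows "distinct [u, v, w]" "{u, w} \<in> uedges C" "{w, v} \<in> uedges C"
proof -
  obtain xs where xs: "distinct xs" "length xs \<ge> 3" "uedges C = cedges xs"
    using assms(1) unfolding is_cycle_def by blast
  then have "length xs = 3"
    using cycle_card_eq[OF assms(1)] assms(2) by simp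
  then obtain a b c where abc: "xs = [a, b, c]"
    by (auto simp: numeral_3_eq_3 length_Suc_conv)
  have "{a, b, c} = {u, v, w}"
    using Union_cedges[of xs] xs(2,3) verts_conv_uedges abc assms(3) by simp
  moreover have "card {a, b, c} = 3"
    using xs(1) abc by simp
  ultimately show "distinct [u, v, w]"
    using card_distinct[of "[u, v, w]"] by simp
  then show "{u, w} \<in> uedges C" "{w, v} \<in> uedges C"
    using cedges_triangle[of _ a b c] \<open>{a, b, c} = {u, v, w}\<close> xs(3) abc by auto
qed

lemma outer_triangle:
  assumes "outer_cycle F f C" "card C = 3" "verts C = {u, v, w}" "fst f = {u, v}"
  obtains e1 e2 where "e1 \<in> F" "fst e1 = {u, w}" "e2 \<in> F" "fst e2 = {w, v}"
    "snd e1 \<noteq> snd e2" "u \<noteq> v" "u \<noteq> w" "v \<noteq> w"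
proof -
  have C: "is_cycle C" "rainbow C" "C \<subseteq> insert f F"
    using assms(1) unfolding outer_cycle_def by blast+
  note triangle = triangle_cycle[OF C(1) assms(2,3)]
  have distinct: "u \<noteq> v" "u \<noteq> w" "v \<noteq> w"
    using triangle(1) by auto
  obtain e1 e2 where e: "e1 \<in> C" "fst e1 = {u, w}" "e2 \<in> C" "fst e2 = {w, v}"
    using uedgesE[OF triangle(2)] uedgesE[OF triangle(3)] by metis
  then have "e1 \<noteq> f" "e2 \<noteq> f" "e1 \<noteq> e2"
    using assms(4) distinct by (auto simp: doubleton_eq_iff)
  then have "e1 \<in> F" "e2 \<in> F"
    using e(1,3) C(3) by blast+
  moreover have "inj_on snd C"
    using C(2) rainbow_iff_inj_on[OF is_cycle_finite[OF C(1)]] by blast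
  then have "snd e1 \<noteq> snd e2"
    using inj_onD[of snd C e1 e2] e(1,3) \<open>e1 \<noteq> e2\<close> by blast
  ultimately show ?thesis
    using that e(2,4) distinct by blast
qed

lemma is_partition_parts:
  assumes "is_partition F ps" "X \<in> set ps" "Y \<in> set ps" "X \<noteq> Y"
  shows "card (verts X \<inter> verts Y) \<le> 1" "colors X \<inter> colors Y = {}"
proof -
  obtain i j where "i < length ps" "j < length ps" "ps ! i = X" "ps ! j = Y"
    using assms(2,3) by (metis in_set_conv_nth)
  with assms(1,4) show "card (verts X \<inter> verts Y) \<le> 1" "colors X \<inter> colors Y = {}"
    unfolding is_partition_def by blast+
qed

text \<open>A part of the extremal Frankenstein graph containing an edge \<open>uw\<close> of an outer triangle is a
  tree: an odd cycle or bad piece would admit the shortcut \<open>uv\<close> (if it also contains \<open>wv\<close>) or the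
  detour \<open>w v u\<close> (otherwise), either of which closes a rainbow even cycle.\<close>

lemma outer_triangle_part_is_tree:
  assumes free: "rainbow_even_cycle_free (insert f F)" and fr: "frankenstein F Cs Bs Ts"
    and f: "fst f = {u, v}" "snd f \<notin> colors F" "{u, v} \<notin> uedges F"
    and X: "X \<in> set (Cs @ Bs @ Ts)" and e1: "e1 \<in> X" "fst e1 = {u, w}"
    and e2: "e2 \<in> F" "fst e2 = {w, v}"
    and distinct: "u \<noteq> v" "u \<noteq> w" "v \<noteq> w" and c12: "snd e1 \<noteq> snd e2"
  shows "X \<in> set Ts"
proof (rule ccontr)
  assume "X \<notin> set Ts"
  moreover have "\<forall>C\<in>set Cs. long_rainbow_odd_cycle C" "\<forall>B\<in>set Bs. bad_piece B"
    using fr unfolding frankenstein_def by blast+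
  ultimately have piece: "long_rainbow_odd_cycle X \<or> bad_piece X"
    using X by auto
  have P: "is_partition F (Cs @ Bs @ Ts)"
    using fr unfolding frankenstein_def by blast
  then have XF: "X \<subseteq> F"
    using X unfolding is_partition_def by blast
  then have XG: "X \<subseteq> insert f F" and fG: "f \<in> insert f F"
    by blast+
  have f_new: "snd f \<notin> colors X" "{u, v} \<notin> uedges X"
    using f(2,3) colors_mono[OF XF] uedges_mono[OF XF] by blast+
  show False
  proof (cases "e2 \<in> X")
    case True
    show False
      by (rule odd_cycle_or_bad_piece_no_shortcut[OF free XG piece e1 True e2(2) fG f(1) f_new
            distinct(1) c12])
  next
    case False
    then obtain Y where Y: "Y \<in> set (Cs @ Bs @ Ts)" "e2 \<in> Y" "X \<noteq> Y"
      using P e2(1) unfolding is_partition_def by blast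
    note parts = is_partition_parts[OF P X Y(1,3)]
    have "w \<in> verts X \<inter> verts Y"
      using in_verts[OF e1(1)] in_verts[OF Y(2)] e1(2) e2(2) by simp
    moreover have "finite (verts X \<inter> verts Y)"
      using finite_verts[OF is_cgraph_subset[OF _ XF]] fr unfolding frankenstein_def by blast
    moreover have "v \<in> verts Y"
      using in_verts[OF Y(2)] e2(2) by simp
    ultimately have "v \<notin> verts X"
      using parts(1) distinct(3) card_mono[of "verts X \<inter> verts Y" "{v, w}"] by auto
    moreover have "snd e2 \<notin> colors X"
      using parts(2) snd_in_colors[OF Y(2)] by blast
    moreover have "snd e2 \<noteq> snd f"
      using f(2) snd_in_colors[OF e2(1)] by metis
    moreover have "fst f = {v, u}"
      using f(1) by (simp add: insert_commute)
    moreover have "e2 \<in> insert f F"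
      using e2(1) by blast
    ultimately show False
      using odd_cycle_or_bad_piece_no_detour[OF free XG piece e1] e2(2) fG f_new(1) by blast
  qed
qed

lemma frankenstein_trees_disjoint:
  assumes "frankenstein F Cs Bs Ts" "X \<in> set Ts" "Y \<in> set Ts" "X \<noteq> Y"
  shows "verts X \<inter> verts Y = {}"
proof -
  obtain i j where "i < length Ts" "j < length Ts" "Ts ! i = X" "Ts ! j = Y"
    using assms(2,3) by (metis in_set_conv_nth)
  with assms(1,4) show ?thesis
    unfolding frankenstein_def by blast
qed

lemma outer_triangle_in_one_tree:
  assumes st: "standing_setup n m D" and ex: "extremal_frankenstein m D F Cs Bs Ts"
    and f: "f \<in> union_D m D" "fst f = {u, v}" "snd f \<notin> colors F" "{u, v} \<notin> uedges F"
    and e1: "e1 \<in> F" "fst e1 = {u, w}" and e2: "e2 \<in> F" "fst e2 = {w, v}"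
    and distinct: "u \<noteq> v" "u \<noteq> w" "v \<noteq> w" and c12: "snd e1 \<noteq> snd e2"
  obtains k where "k < length Ts" "e1 \<in> Ts ! k" "e2 \<in> Ts ! k"
proof -
  have FU: "F \<subseteq> union_D m D" and fr: "frankenstein F Cs Bs Ts"
    using ex unfolding extremal_frankenstein_def by blast+
  have P: "is_partition F (Cs @ Bs @ Ts)" and cgF: "is_cgraph F"
    using fr unfolding frankenstein_def by blast+
  have "is_cgraph (insert f F)"
    using is_cgraph_insert[OF cgF] f(2,4) distinct(1) by simp
  then have free: "rainbow_even_cycle_free (insert f F)"
    unfolding rainbow_even_cycle_free_def
    using standing_setup_no_rainbow_even_cycle[OF st] FU f(1) by blast
  obtain X Y where X: "X \<in> set (Cs @ Bs @ Ts)" "e1 \<in> X" and Y: "Y \<in> set (Cs @ Bs @ Ts)" "e2 \<in> Y"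
    using P e1(1) e2(1) unfolding is_partition_def by blast
  have "X \<in> set Ts"
    by (rule outer_triangle_part_is_tree[OF free fr f(2-4) X e1(2) e2 distinct c12])
  moreover have "Y \<in> set Ts"
  proof (rule outer_triangle_part_is_tree[OF free fr _ f(3) _ Y _ e1(1) _ distinct(1)[symmetric]
        distinct(3,2) c12[symmetric]])
    show "fst f = {v, u}" "{v, u} \<notin> uedges F" "fst e2 = {v, w}" "fst e1 = {w, u}"
      using f(2,4) e1(2) e2(2) by (simp_all add: insert_commute)
  qed
  moreover have "w \<in> verts X \<inter> verts Y"
    using in_verts[OF X(2)] in_verts[OF Y(2)] e1(2) e2(2) by simp
  ultimately have "X = Y"
    using frankenstein_trees_disjoint[OF fr] by blast
  then show ?thesis
    using that X(2) Y(2) \<open>X \<in> set Ts\<close> by (metis in_set_conv_nth)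
qed

lemma outer_triangle_child:
  assumes st: "standing_setup n m D" and ex: "extremal_frankenstein m D F Cs Bs Ts"
    and k: "k < length Ts" and e1: "e1 \<in> Ts ! k" "fst e1 = {u, w}"
    and e2: "e2 \<in> Ts ! k" "fst e2 = {w, v}"
    and f: "f \<in> union_D m D" "fst f = {u, v}" "snd f \<notin> colors F" "{u, v} \<notin> uedges F"
    and distinct: "u \<noteq> v" "u \<noteq> w" "v \<noteq> w"
  shows "u \<in> child (Ts ! k) w"
proof -
  have "is_tree (Ts ! k)"
    using ex k unfolding extremal_frankenstein_def frankenstein_def by simp
  moreover have uw: "{u, w} \<in> uedges (Ts ! k)"
    using fst_in_uedges[OF e1(1)] e1(2) by simp
  ultimately have "depth (Ts ! k) u = depth (Ts ! k) w + 1 \<or> depth (Ts ! k) w = depth (Ts ! k) u + 1"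
    using tree_adjacent_depth distinct(2) by blast
  moreover have "depth (Ts ! k) u + 1 \<noteq> depth (Ts ! k) w"
    using extremal_frankenstein_no_tree_exchange[OF st ex k uw e2 f distinct] by blast
  ultimately have "depth (Ts ! k) u = depth (Ts ! k) w + 1"
    by linarith
  moreover have "u \<in> verts (Ts ! k)" "{w, u} \<in> uedges (Ts ! k)"
    using in_verts[OF e1(1)] e1(2) uw by (simp_all add: insert_commute)
  ultimately show ?thesis
    unfolding child_def by blast
qed

theorem proposition3p3:
  fixes n m :: nat and D :: "nat \<Rightarrow> cgraph"
    and F :: cgraph and Cs Bs Ts :: "cgraph list"
    and f :: "nat set \<times> nat" and C :: cgraph and u v w :: nat
  assumes "standing_setup n m D"
    and "extremal_frankenstein m D F Cs Bs Ts"
    and "outer_edge m D F f"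
    and "fst f = {u, v}"
    and "outer_cycle F f C"
    and "card C = 3"
    and "verts C = {u, v, w}"
  shows "\<exists>k<length Ts. u \<in> verts (Ts ! k) \<and> v \<in> verts (Ts ! k) \<and> w \<in> verts (Ts ! k) \<and>
           u \<in> child (Ts ! k) w \<and> v \<in> child (Ts ! k) w"
proof -
  note st = assms(1) and ex = assms(2)
  have f: "f \<in> union_D m D" "fst f = {u, v}" "snd f \<notin> colors F" "{u, v} \<notin> uedges F"
    using outer_edge_new[OF st assms(3)] assms(4) by simp_all
  obtain e1 e2 where e1: "e1 \<in> F" "fst e1 = {u, w}" and e2: "e2 \<in> F" "fst e2 = {w, v}"
    and "snd e1 \<noteq> snd e2" and distinct: "u \<noteq> v" "u \<noteq> w" "v \<noteq> w"
    using outer_triangle[OF assms(5-7,4)] by metis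
  then obtain k where k: "k < length Ts" "e1 \<in> Ts ! k" "e2 \<in> Ts ! k"
    using outer_triangle_in_one_tree[OF st ex f] by metis
  have "u \<in> child (Ts ! k) w"
    using outer_triangle_child[OF st ex k(1,2) e1(2) k(3) e2(2) f distinct] .
  moreover have "v \<in> child (Ts ! k) w"
  proof (rule outer_triangle_child[OF st ex k(1,3) _ k(2) _ f(1) _ f(3)])
    show "fst e2 = {v, w}" "fst e1 = {w, u}" "fst f = {v, u}" "{v, u} \<notin> uedges F"
      using e1(2) e2(2) f(2,4) by (simp_all add: insert_commute)
  qed (use distinct in auto)
  moreover have "w \<in> verts (Ts ! k)"
    using in_verts[OF k(2)] e1(2) by simp
  ultimately show ?thesis
    using k(1) unfolding child_def by blast
qed

end
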